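(* The map $d_\mu(N_1,N_2)=|\boldsymbol\mu(N_1)\,\triangle\,\boldsymbol\mu(N_2)|$ (cardinality of the symmetric difference of the sets $\boldsymbol\mu(N_1)$ and $\boldsymbol\mu(N_2)$) is a well-defined metric on the set of isomorphism classes of orchard networks over sets of taxa contained in $[n]$; that is, for all such orchard networks $N_1,N_2,N_3$: $d_\mu(N_1,N_2)\ge0$; $d_\mu(N_1,N_2)=0$ if and only if $N_1\cong N_2$; $d_\mu(N_1,N_2)=d_\mu(N_2,N_1)$; and $d_\mu(N_1,N_3)\le d_\mu(N_1,N_2)+d_\mu(N_2,N_3)$.
   Context: A (binary) phylogenetic network on a finite set $X\subseteq[n]=\{1,\dots,n\}$ is a directed acyclic graph $N=(V,A)$ without parallel arcs in which every node is exactly one of: the root (indegree 0, outdegree 1; there is exactly one), a leaf (indegree 1, outdegree 0), a tree node (indegree 1, outdegree 2), or a reticulation (indegree 2, outdegree 1); the leaves are identified with the elements of $X$. $V_T(N)$ denotes the set of leaves and tree nodes, $V_H(N)$ the set of reticulations. Two networks are isomorphic ($N\cong N'$) if there is a bijection between their node sets that is the identity on leaves (labels) and maps arcs to arcs and non-arcs to non-arcs. $m(u,v)$ is the number of directed paths from $u$ to $v$ (trivial paths allowed). Extended $\mu$-vectors: $\mu_i(u)=m(u,i)$ for $i\in[n]$ (0 if $i$ is not a leaf), $\mu_0(u)=\sum_{h\in V_H(N)} m(u,h)$, $\mu(u)=(\mu_0(u),\dots,\mu_n(u))$; the extended $\mu$-representation $\boldsymbol\mu(N)$ is $\{\mu(u)\mid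 u\in V_T(N)\}$ (for orchard networks it has no repeated elements, so it is a set). For distinct leaves $i,j$ with parents $p_i,p_j$: $(i,j)$ is a cherry of $N$ if $p_i=p_j$; a reticulated-cherry of $N$ if $p_i$ is a reticulation, $p_j$ is a tree node and $p_j$ is a parent of $p_i$; reducible if either. Suppressing a node with indegree 1 and outdegree 1 means deleting it and its two arcs and adding an arc from its parent to its child. $N^{(i,j)}$: if $(i,j)$ is a cherry, delete leaf $i$ and its incoming arc, then suppress $p_i$; if a reticulated-cherry, delete the arc $p_jp_i$ and suppress $p_i$ and $p_j$. A sequence $S=s_1\cdots s_k$ is reducible in $N$ if $s_1$ is reducible in $N$ and each $s_t$ is reducible in the network obtained by successively reducing $s_1,\dots,s_{t-1}$; $N^S$ is the final network. $N$ is an orchard network if there is a reducible sequence $S$ with $N^S$ equal to the network consisting of a root joined by an arc to a single leaf. *)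

theory Defs
  imports Main
begin

text \<open>Nodes: leaves are identified with their labels (Leaf i); all other nodes are Inner k.
A network is a pair (V, A) of a node set and an arc set (no parallel arcs since A is a set).\<close>

datatype node = Leaf nat | Inner nat

type_synonym network = "node set \<times> (node \<times> node) set"

definition indeg :: "(node \<times> node) set \<Rightarrow> node \<Rightarrow> nat" where
  "indeg A v = card {u. (u, v) \<in> A}"

definition outdeg :: "(node \<times> node) set \<Rightarrow> node \<Rightarrow> nat" where
  "outdeg A v = card {w. (v, w) \<in> A}"

definition is_root :: "(node \<times> node) set \<Rightarrow> node \<Rightarrow> bool" where
  "is_root A v \<longleftrightarrow> indeg A v = 0 \<and> outdeg A v = 1"

definition is_leaf :: "(node \<times> node) set \<Rightarrow> node \<Rightarrow> bool" where
  "is_leaf A v \<longleftrightarrow> indeg A v = 1 \<and> outdeg A v = 0"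

definition is_tree_node :: "(node \<times> node) set \<Rightarrow> node \<Rightarrow> bool" where
  "is_tree_node A v \<longleftrightarrow> indeg A v = 1 \<and> outdeg A v = 2"

definition is_retic :: "(node \<times> node) set \<Rightarrow> node \<Rightarrow> bool" where
  "is_retic A v \<longleftrightarrow> indeg A v = 2 \<and> outdeg A v = 1"

definition phylo_net :: "nat \<Rightarrow> network \<Rightarrow> bool" where
  "phylo_net n N \<longleftrightarrow> (case N of (V, A) \<Rightarrow>
     finite V \<and> A \<subseteq> V \<times> V \<and> (\<forall>v. (v, v) \<notin> A\<^sup>+) \<and>
     (\<exists>!r. r \<in> V \<and> is_root A r) \<and>
     (\<forall>v\<in>V. is_root A v \<or> is_leaf A v \<or> is_tree_node A v \<or> is_retic A v) \<and>
     (\<forall>v\<in>V. is_leaf A v \<longleftrightarrow> (\<exists>i. v = Leaf i)) \<and>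
     {i. Leaf i \<in> V} \<subseteq> {1..n})"

definition parent :: "(node \<times> node) set \<Rightarrow> node \<Rightarrow> node" where
  "parent A v = (THE u. (u, v) \<in> A)"

definition child :: "(node \<times> node) set \<Rightarrow> node \<Rightarrow> node" where
  "child A v = (THE w. (v, w) \<in> A)"

definition suppress :: "network \<Rightarrow> node \<Rightarrow> network" where
  "suppress N v = (case N of (V, A) \<Rightarrow>
     (V - {v}, (A - {(parent A v, v), (v, child A v)}) \<union> {(parent A v, child A v)}))"

definition is_cherry :: "network \<Rightarrow> nat \<times> nat \<Rightarrow> bool" where
  "is_cherry N p = (case N of (V, A) \<Rightarrow> case p of (i, j) \<Rightarrow>
     i \<noteq> j \<and> Leaf i \<in> V \<and> Leaf j \<in> V \<and> parent A (Leaf i) = parent A (Leaf j))"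

definition is_ret_cherry :: "network \<Rightarrow> nat \<times> nat \<Rightarrow> bool" where
  "is_ret_cherry N p = (case N of (V, A) \<Rightarrow> case p of (i, j) \<Rightarrow>
     i \<noteq> j \<and> Leaf i \<in> V \<and> Leaf j \<in> V \<and>
     is_retic A (parent A (Leaf i)) \<and> is_tree_node A (parent A (Leaf j)) \<and>
     (parent A (Leaf j), parent A (Leaf i)) \<in> A)"

definition is_reducible :: "network \<Rightarrow> nat \<times> nat \<Rightarrow> bool" where
  "is_reducible N p \<longleftrightarrow> is_cherry N p \<or> is_ret_cherry N p"

definition reduce :: "network \<Rightarrow> nat \<times> nat \<Rightarrow> network" where
  "reduce N p = (case N of (V, A) \<Rightarrow> case p of (i, j) \<Rightarrow>
     if is_cherry N p then
       (let pi = parent A (Leaf i) in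
        suppress (V - {Leaf i}, A - {(pi, Leaf i)}) pi)
     else if is_ret_cherry N p then
       (let pi = parent A (Leaf i); pj = parent A (Leaf j) in
        suppress (suppress (V, A - {(pj, pi)}) pi) pj)
     else N)"

fun reducible_seq :: "network \<Rightarrow> (nat \<times> nat) list \<Rightarrow> bool" where
  "reducible_seq N [] = True"
| "reducible_seq N (s # S) = (is_reducible N s \<and> reducible_seq (reduce N s) S)"

definition reduce_seq :: "network \<Rightarrow> (nat \<times> nat) list \<Rightarrow> network" where
  "reduce_seq N S = foldl reduce N S"

definition orchard :: "nat \<Rightarrow> network \<Rightarrow> bool" where
  "orchard n N \<longleftrightarrow> phylo_net n N \<and>
     (\<exists>S. reducible_seq N S \<and>
        (\<exists>r i. (\<forall>k. r \<noteq> Leaf k) \<and> reduce_seq N S = ({r, Leaf i}, {(r, Leaf i)})))"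

definition net_iso :: "network \<Rightarrow> network \<Rightarrow> bool" where
  "net_iso N1 N2 \<longleftrightarrow> (case N1 of (V1, A1) \<Rightarrow> case N2 of (V2, A2) \<Rightarrow>
     (\<exists>f. bij_betw f V1 V2 \<and> (\<forall>i. Leaf i \<in> V1 \<longrightarrow> f (Leaf i) = Leaf i) \<and>
          (\<forall>u\<in>V1. \<forall>v\<in>V1. (u, v) \<in> A1 \<longleftrightarrow> (f u, f v) \<in> A2)))"

text \<open>Directed paths as nonempty node lists (trivial paths allowed); m(u,v) counts them.\<close>
definition is_path :: "(node \<times> node) set \<Rightarrow> node list \<Rightarrow> bool" where
  "is_path A xs \<longleftrightarrow> xs \<noteq> [] \<and> (\<forall>k. Suc k < length xs \<longrightarrow> (xs ! k, xs ! Suc k) \<in> A)"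

definition npaths :: "(node \<times> node) set \<Rightarrow> node \<Rightarrow> node \<Rightarrow> nat" where
  "npaths A u v = card {xs. is_path A xs \<and> hd xs = u \<and> last xs = v}"

text \<open>Extended mu-vector (mu_0, ..., mu_n) as a list of length n+1.\<close>
definition mu_vec :: "nat \<Rightarrow> network \<Rightarrow> node \<Rightarrow> nat list" where
  "mu_vec n N u = (case N of (V, A) \<Rightarrow>
     map (\<lambda>i. if i = 0 then (\<Sum>h\<in>{h\<in>V. is_retic A h}. npaths A u h)
               else npaths A u (Leaf i)) [0..<Suc n])"

definition mu_rep :: "nat \<Rightarrow> network \<Rightarrow> nat list set" where
  "mu_rep n N = (case N of (V, A) \<Rightarrow>
     mu_vec n N ` {v\<in>V. is_leaf A v \<or> is_tree_node A v})"

definition d_mu :: "nat \<Rightarrow> network \<Rightarrow> network \<Rightarrow> nat" where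
  "d_mu n N1 N2 = card ((mu_rep n N1 - mu_rep n N2) \<union> (mu_rep n N2 - mu_rep n N1))"

end

theory Submission
  imports Defs
begin

text \<open>Symmetry and the triangle inequality hold for the size of the symmetric difference of any
  finite sets, so the content is that \<open>\<mu>\<close>-representations separate non-isomorphic orchard networks.
  We induct along a reduction sequence of \<open>N\<^sub>1\<close>. A cherry \<open>(i, j)\<close> shows up in the representation as
  the vector \<open>e\<^sub>i + e\<^sub>j\<close> of its parent, and a reticulated cherry as the vector \<open>e\<^sub>0 + e\<^sub>i + e\<^sub>j\<close> of
  the parent of \<open>j\<close>; conversely, any network containing such a vector has this (reticulated) cherry,
  the orientation of a reticulated cherry being forced by comparing the coordinates \<open>i\<close> and \<open>j\<close>.
  Reducing the pair changes the \<open>\<mu>\<close>-representation by a map depending only on \<open>(i, j)\<close>, so the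
  reduced networks again have equal representations, are isomorphic by induction, and the
  isomorphism extends over the two nodes removed by the reduction.\<close>

section \<open>Parents, children and path counts\<close>

definition parents :: "(node \<times> node) set \<Rightarrow> node \<Rightarrow> node set" where
  "parents A v = {u. (u, v) \<in> A}"

definition children :: "(node \<times> node) set \<Rightarrow> node \<Rightarrow> node set" where
  "children A u = {w. (u, w) \<in> A}"

lemma parents_eq_children_converse: "parents B v = children (B\<inverse>) v"
  by (auto simp: parents_def children_def)

lemma indeg_eq_card_parents: "indeg A v = card (parents A v)"
  by (simp add: indeg_def parents_def)

lemma outdeg_eq_card_children: "outdeg A v = card (children A v)"
  by (simp add: outdeg_def children_def)

lemma finite_children: "finite A \<Longrightarrow> finite (children A v)"
  by (rule finite_subset[of _ "snd ` A"]) (force simp: children_def)+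

lemma parent_eq: "parents A v = {p} \<Longrightarrow> parent A v = p"
  unfolding parent_def parents_def by (rule the_equality) auto

lemma child_eq: "children A v = {c} \<Longrightarrow> child A v = c"
  unfolding child_def children_def by (rule the_equality) auto

lemma is_path_Cons: "is_path A (x # xs) \<longleftrightarrow> xs = [] \<or> (x, hd xs) \<in> A \<and> is_path A xs"
proof (cases xs)
  case (Cons y ys)
  have "(\<forall>k. Suc k < length (x # xs) \<longrightarrow> ((x # xs) ! k, (x # xs) ! Suc k) \<in> A) \<longleftrightarrow>
        (x, y) \<in> A \<and> (\<forall>k. Suc k < length xs \<longrightarrow> (xs ! k, xs ! Suc k) \<in> A)"
    (is "?L \<longleftrightarrow> ?R")
  proof
    assume ?L
    then show ?R using Cons by (metis Suc_less_eq length_Cons nth_Cons_0 nth_Cons_Suc zero_less_Suc)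
  next
    assume ?R
    then show ?L using Cons by (auto simp: less_Suc_eq_0_disj nth_Cons split: nat.split)
  qed
  then show ?thesis using Cons by (simp add: is_path_def)
qed (simp add: is_path_def)

lemma is_path_ne: "is_path A xs \<Longrightarrow> xs \<noteq> []"
  by (simp add: is_path_def)

lemma is_path_singleton [simp]: "is_path A [x]"
  by (simp add: is_path_def)

lemma is_path_snoc: "is_path A (xs @ [y]) \<longleftrightarrow> xs = [] \<or> is_path A xs \<and> (last xs, y) \<in> A"
proof (induction xs)
  case (Cons x xs)
  then show ?case by (cases xs) (auto simp: is_path_Cons)
qed simp

lemma is_path_rev: "is_path A xs \<Longrightarrow> is_path (A\<inverse>) (rev xs)"
proof (induction xs)
  case (Cons x xs)
  show ?case
  proof (cases xs)
    case (Cons y ys)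
    with Cons.prems have "(x, y) \<in> A" "is_path A xs" by (auto simp: is_path_Cons)
    with Cons.IH Cons show ?thesis
      using is_path_snoc[of "A\<inverse>" "rev xs" x] by (simp add: last_rev)
  qed simp
qed (simp add: is_path_def)

lemma path_rtrancl: "is_path A xs \<Longrightarrow> (hd xs, last xs) \<in> A\<^sup>*"
proof (induction xs)
  case (Cons x xs)
  then show ?case
    by (cases xs) (auto simp: is_path_Cons intro: converse_rtrancl_into_rtrancl)
qed (simp add: is_path_def)

lemma path_trancl: "is_path A (x # xs) \<Longrightarrow> xs \<noteq> [] \<Longrightarrow> (x, last xs) \<in> A\<^sup>+"
  using path_rtrancl[of A xs] by (auto simp: is_path_Cons intro: rtrancl_into_trancl2)

lemma rtrancl_imp_path: "(u, v) \<in> A\<^sup>* \<Longrightarrow> \<exists>xs. is_path A xs \<and> hd xs = u \<and> last xs = v"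
proof (induction rule: converse_rtrancl_induct)
  case base
  then show ?case by (intro exI[of _ "[v]"]) simp
next
  case (step y z)
  then obtain xs where "is_path A xs" "hd xs = z" "last xs = v" by blast
  with step show ?case by (intro exI[of _ "y # xs"]) (auto simp: is_path_Cons dest: is_path_ne)
qed

lemma path_nth_trancl: "is_path A xs \<Longrightarrow> k < l \<Longrightarrow> l < length xs \<Longrightarrow> (xs ! k, xs ! l) \<in> A\<^sup>+"
proof (induction l)
  case (Suc l)
  then have "(xs ! l, xs ! Suc l) \<in> A" by (simp add: is_path_def)
  with Suc show ?case by (cases "k = l") auto
qed simp

lemma path_distinct:
  assumes "acyclic A" "is_path A xs"
  shows "distinct xs"
  unfolding distinct_conv_nth
proof (intro allI impI)
  fix k l assume kl: "k < length xs" "l < length xs" "k \<noteq> l"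
  have "(xs ! min k l, xs ! max k l) \<in> A\<^sup>+"
    using assms(2) kl by (intro path_nth_trancl) (auto simp: min_def max_def)
  then show "xs ! k \<noteq> xs ! l"
    using assms(1) kl(3) by (auto simp: acyclic_def min_def max_def split: if_splits)
qed

lemma set_path_subset: "is_path A xs \<Longrightarrow> set xs \<subseteq> insert (hd xs) (snd ` A)"
proof (induction xs)
  case (Cons x xs)
  then show ?case by (cases xs) (force simp: is_path_Cons)+
qed simp

definition paths_between :: "(node \<times> node) set \<Rightarrow> node \<Rightarrow> node \<Rightarrow> node list set" where
  "paths_between A u v = {xs. is_path A xs \<and> hd xs = u \<and> last xs = v}"

lemma npaths_eq_card: "npaths A u v = card (paths_between A u v)"
  by (simp add: npaths_def paths_between_def)

lemma finite_paths_between: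
  assumes "finite A" "acyclic A"
  shows "finite (paths_between A u v)"
proof (rule finite_subset)
  show "paths_between A u v \<subseteq> {xs. set xs \<subseteq> insert u (snd ` A) \<and> distinct xs}"
    using set_path_subset path_distinct[OF assms(2)] unfolding paths_between_def by blast
  show "finite {xs. set xs \<subseteq> insert u (snd ` A) \<and> distinct xs}"
    using assms(1) by (intro finite_subset_distinct) auto
qed

lemma npaths_pos_iff:
  assumes "finite A" "acyclic A"
  shows "npaths A u v > 0 \<longleftrightarrow> (u, v) \<in> A\<^sup>*"
proof -
  have "paths_between A u v \<noteq> {} \<longleftrightarrow> (u, v) \<in> A\<^sup>*"
    unfolding paths_between_def using path_rtrancl rtrancl_imp_path by fastforce
  then show ?thesis
    using finite_paths_between[OF assms] by (simp add: npaths_eq_card card_gt_0_iff)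
qed

lemma npaths_eq_0:
  assumes "finite A" "acyclic A" "(u, v) \<notin> A\<^sup>*"
  shows "npaths A u v = 0"
  using npaths_pos_iff[OF assms(1,2)] assms(3) by (metis neq0_conv)

lemma npaths_self:
  assumes "acyclic A"
  shows "npaths A u u = 1"
proof -
  have "xs = [u]" if "is_path A xs" "hd xs = u" "last xs = u" for xs
  proof (cases xs)
    case (Cons x ys)
    have "ys = []"
      using path_trancl[of A u ys] that assms Cons by (cases "ys = []") (auto simp: acyclic_def)
    with Cons that show ?thesis by simp
  qed (use that in \<open>simp add: is_path_def\<close>)
  then have "paths_between A u u = {[u]}"
    by (auto simp: paths_between_def)
  then show ?thesis by (simp add: npaths_eq_card)
qed

lemma npaths_converse: "npaths A u v = npaths (A\<inverse>) v u"
proof -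
  have "paths_between A u v = rev ` paths_between (A\<inverse>) v u"
  proof (rule set_eqI, rule iffI)
    fix xs assume "xs \<in> paths_between A u v"
    then have "rev xs \<in> paths_between (A\<inverse>) v u"
      by (auto simp: paths_between_def is_path_rev hd_rev last_rev)
    then show "xs \<in> rev ` paths_between (A\<inverse>) v u" by (metis image_eqI rev_rev_ident)
  next
    fix xs assume "xs \<in> rev ` paths_between (A\<inverse>) v u"
    then obtain ys where "xs = rev ys" "is_path (A\<inverse>) ys" "hd ys = v" "last ys = u"
      by (auto simp: paths_between_def)
    then show "xs \<in> paths_between A u v"
      using is_path_rev[of "A\<inverse>" ys] is_path_ne[of "A\<inverse>" ys]
      by (simp add: paths_between_def hd_rev last_rev)
  qed
  then show ?thesis by (simp add: npaths_eq_card card_image)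
qed

text \<open>Every nontrivial path from \<open>u\<close> starts with an arc to a child of \<open>u\<close>.\<close>
lemma npaths_children_sum:
  assumes "finite A" "acyclic A" "u \<noteq> v"
  shows "npaths A u v = (\<Sum>w\<in>children A u. npaths A w v)"
proof -
  have split: "paths_between A u v = (\<Union>w\<in>children A u. (Cons u) ` paths_between A w v)"
  proof (rule set_eqI, rule iffI)
    fix xs assume "xs \<in> paths_between A u v"
    then have p: "is_path A xs" "hd xs = u" "last xs = v" by (auto simp: paths_between_def)
    then obtain ys where xs: "xs = u # ys" by (cases xs) (auto simp: is_path_def)
    with p assms(3) have "ys \<noteq> []" by auto
    with p xs show "xs \<in> (\<Union>w\<in>children A u. (Cons u) ` paths_between A w v)"
      by (auto simp: is_path_Cons children_def paths_between_def)
  qed (auto simp: children_def paths_between_def is_path_Cons dest: is_path_ne)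
  have "card (paths_between A u v) = (\<Sum>w\<in>children A u. card ((Cons u) ` paths_between A w v))"
    unfolding split
    by (rule card_UN_disjoint)
      (use assms(1) finite_children finite_paths_between[OF assms(1,2)] in
        \<open>auto simp: paths_between_def\<close>)
  then show ?thesis by (simp add: npaths_eq_card card_image)
qed

locale phylo_network =
  fixes n :: nat and V :: "node set" and A :: "(node \<times> node) set"
  assumes phylo_net_VA: "phylo_net n (V, A)"
begin

lemma finite_V: "finite V"
  and arcs_subset: "A \<subseteq> V \<times> V"
  and acyclic_A: "acyclic A"
  and ex1_root: "\<exists>!r. r \<in> V \<and> is_root A r"
  and node_cases: "\<And>v. v \<in> V \<Longrightarrow> is_root A v \<or> is_leaf A v \<or> is_tree_node A v \<or> is_retic A v"
  and leaf_iff_Leaf: "\<And>v. v \<in> V \<Longrightarrow> is_leaf A v \<longleftrightarrow> (\<exists>i. v = Leaf i)"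
  and labels_subset: "{i. Leaf i \<in> V} \<subseteq> {1..n}"
  using phylo_net_VA unfolding phylo_net_def acyclic_def by auto

lemma finite_A: "finite A"
  using arcs_subset finite_V by (meson finite_SigmaI finite_subset)

lemma arc_nodes: "(u, v) \<in> A \<Longrightarrow> u \<in> V \<and> v \<in> V"
  using arcs_subset by auto

lemma children_subset: "children A u \<subseteq> V" and parents_subset: "parents A u \<subseteq> V"
  using arcs_subset by (auto simp: children_def parents_def)

lemma finite_children_A: "finite (children A u)"
  using children_subset finite_V by (rule finite_subset)

lemma finite_parents_A: "finite (parents A u)"
  using parents_subset finite_V by (rule finite_subset)

lemma wf_A: "wf A"
  by (rule finite_acyclic_wf[OF finite_A acyclic_A])

lemma wf_converse_A: "wf (A\<inverse>)"
  by (rule finite_acyclic_wf_converse[OF finite_A acyclic_A])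

lemma not_trancl_self: "(u, u) \<notin> A\<^sup>+"
  using acyclic_A by (simp add: acyclic_def)

lemma leaf_shape:
  assumes "is_leaf A v"
  shows "children A v = {}" "\<exists>p. parents A v = {p}"
  using assms finite_children_A[of v]
  by (auto simp: is_leaf_def indeg_eq_card_parents outdeg_eq_card_children card_1_singleton_iff)

lemma tree_node_shape:
  assumes "is_tree_node A v"
  shows "\<exists>p. parents A v = {p}" "\<exists>a b. a \<noteq> b \<and> children A v = {a, b}"
  using assms
  by (auto simp: is_tree_node_def indeg_eq_card_parents outdeg_eq_card_children
      card_1_singleton_iff card_2_iff)

lemma retic_shape:
  assumes "is_retic A v"
  shows "\<exists>a b. a \<noteq> b \<and> parents A v = {a, b}" "\<exists>c. children A v = {c}"
  using assms
  by (auto simp: is_retic_def indeg_eq_card_parents outdeg_eq_card_children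
      card_1_singleton_iff card_2_iff)

lemma root_shape:
  assumes "is_root A v"
  shows "parents A v = {}" "\<exists>c. children A v = {c}"
  using assms finite_parents_A[of v]
  by (auto simp: is_root_def indeg_eq_card_parents outdeg_eq_card_children card_1_singleton_iff)

lemma leaf_not_root: "is_leaf A v \<Longrightarrow> \<not> is_root A v"
  and leaf_not_tree: "is_leaf A v \<Longrightarrow> \<not> is_tree_node A v"
  and leaf_not_retic: "is_leaf A v \<Longrightarrow> \<not> is_retic A v"
  and tree_not_retic: "is_tree_node A v \<Longrightarrow> \<not> is_retic A v"
  and root_not_retic: "is_root A v \<Longrightarrow> \<not> is_retic A v"
  and root_not_tree: "is_root A v \<Longrightarrow> \<not> is_tree_node A v"
  by (auto simp: is_leaf_def is_root_def is_tree_node_def is_retic_def)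

lemma is_leaf_Leaf: "Leaf i \<in> V \<Longrightarrow> is_leaf A (Leaf i)"
  using leaf_iff_Leaf by auto

lemma nonleaf_not_Leaf: "v \<in> V \<Longrightarrow> \<not> is_leaf A v \<Longrightarrow> v \<noteq> Leaf k"
  using leaf_iff_Leaf by auto

lemma children_Leaf: "Leaf i \<in> V \<Longrightarrow> children A (Leaf i) = {}"
  using is_leaf_Leaf leaf_shape by auto

lemma Leaf_label_range: "Leaf i \<in> V \<Longrightarrow> 1 \<le> i \<and> i \<le> n"
  using labels_subset by auto

lemma children_nonleaf: "u \<in> V \<Longrightarrow> \<not> is_leaf A u \<Longrightarrow> children A u \<noteq> {}"
  using node_cases tree_node_shape retic_shape root_shape by fastforce

lemma arc_target_not_root: "(p, v) \<in> A \<Longrightarrow> \<not> is_root A v"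
  using root_shape(1) by (auto simp: parents_def)

lemma child_not_root: "c \<in> children A u \<Longrightarrow> \<not> is_root A c"
  using arc_target_not_root by (auto simp: children_def)

definition the_root :: node where
  "the_root = (THE r. r \<in> V \<and> is_root A r)"

lemma the_root: "the_root \<in> V" "is_root A the_root"
  using theI'[OF ex1_root] unfolding the_root_def by auto

lemma root_unique: "v \<in> V \<Longrightarrow> is_root A v \<Longrightarrow> v = the_root"
  using ex1_root the_root by blast

lemma root_reaches: "v \<in> V \<Longrightarrow> (the_root, v) \<in> A\<^sup>*"
proof (induction v rule: wf_induct_rule[OF wf_A])
  case (1 v)
  show ?case
  proof (cases "is_root A v")
    case True
    then show ?thesis using root_unique 1 by simp
  next
    case False
    with 1(2) have "parents A v \<noteq> {}"
      using node_cases leaf_shape tree_node_shape retic_shape by fastforce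
    then obtain p where p: "(p, v) \<in> A" by (auto simp: parents_def)
    then have "(the_root, p) \<in> A\<^sup>*" using 1 arc_nodes by blast
    then show ?thesis using p by simp
  qed
qed

end

section \<open>\<open>\<mu>\<close>-vectors\<close>

text \<open>\<^term>\<open>mu V A u i\<close> is the \<open>i\<close>-th coordinate of the extended \<open>\<mu>\<close>-vector of \<open>u\<close>, for
  every \<open>i\<close>; the coordinates beyond \<open>n\<close> vanish, so \<^term>\<open>mu_vec n (V, A) u\<close> is its restriction to
  \<open>[0..n]\<close>.\<close>
definition mu :: "node set \<Rightarrow> (node \<times> node) set \<Rightarrow> node \<Rightarrow> nat \<Rightarrow> nat" where
  "mu V A u i =
     (if i = 0 then (\<Sum>h\<in>{h\<in>V. is_retic A h}. npaths A u h) else npaths A u (Leaf i))"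

lemma mu_vec_eq_map_mu: "mu_vec n (V, A) u = map (mu V A u) [0..<Suc n]"
  by (simp add: mu_vec_def mu_def)

text \<open>The contribution of the trivial path at \<open>u\<close> to \<^term>\<open>mu V A u\<close>.\<close>
definition trivial_mu :: "(node \<times> node) set \<Rightarrow> node \<Rightarrow> nat \<Rightarrow> nat" where
  "trivial_mu A u i =
     (if i = 0 then (if is_retic A u then 1 else 0) else (if u = Leaf i then 1 else 0))"

definition unit_vec :: "nat \<Rightarrow> nat \<Rightarrow> nat" where
  "unit_vec k = (\<lambda>x. if x = k then 1 else 0)"

definition tree_leaf_nodes :: "node set \<Rightarrow> (node \<times> node) set \<Rightarrow> node set" where
  "tree_leaf_nodes V A = {v\<in>V. is_leaf A v \<or> is_tree_node A v}"

definition mu_set :: "node set \<Rightarrow> (node \<times> node) set \<Rightarrow> (nat \<Rightarrow> nat) set" where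
  "mu_set V A = mu V A ` tree_leaf_nodes V A"

lemma unit_vec_sum2:
  assumes "i \<noteq> j" "\<forall>x. unit_vec a x + unit_vec b x = unit_vec i x + unit_vec j x"
  shows "a = i \<and> b = j \<or> a = j \<and> b = i"
proof -
  have "unit_vec a i + unit_vec b i = 1" "unit_vec a j + unit_vec b j = 1"
    using spec[OF assms(2), of i] spec[OF assms(2), of j] assms(1) by (simp_all add: unit_vec_def)
  then show ?thesis using assms(1) unfolding unit_vec_def
    by (cases "a = i"; cases "b = i"; cases "a = j"; cases "b = j") simp_all
qed

context phylo_network
begin

lemma tree_leaf_nodesD: "v \<in> tree_leaf_nodes V A \<Longrightarrow> v \<in> V \<and> \<not> is_retic A v \<and> \<not> is_root A v"
  by (auto simp: tree_leaf_nodes_def is_leaf_def is_root_def is_tree_node_def is_retic_def)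

text \<open>The root's child lies above every other node, so it cannot be a reticulation.\<close>
lemma root_child:
  obtains c where "children A the_root = {c}" "c \<in> tree_leaf_nodes V A"
    "\<And>v. v \<in> V \<Longrightarrow> v \<noteq> the_root \<Longrightarrow> (c, v) \<in> A\<^sup>*"
proof -
  obtain c where c: "children A the_root = {c}" using root_shape(2)[OF the_root(2)] by auto
  then have root_c: "(the_root, c) \<in> A" by (auto simp: children_def)
  have reach: "(c, v) \<in> A\<^sup>*" if v: "v \<in> V" "v \<noteq> the_root" for v
  proof -
    obtain w where "(the_root, w) \<in> A" "(w, v) \<in> A\<^sup>*"
      using root_reaches[OF v(1)] v(2) by (cases rule: converse_rtranclE) auto
    then show ?thesis using c by (auto simp: children_def)
  qed
  have "\<not> is_retic A c"
  proof
    assume "is_retic A c"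
    then obtain x where x: "x \<in> parents A c" "x \<noteq> the_root"
      using retic_shape(1) by (metis insertCI)
    then have "(x, c) \<in> A" "x \<in> V" using arc_nodes by (auto simp: parents_def)
    with reach x(2) have "(c, c) \<in> A\<^sup>+" by (meson rtrancl_into_trancl1)
    then show False using not_trancl_self by blast
  qed
  moreover have "c \<in> V" "\<not> is_root A c" using root_c arc_nodes arc_target_not_root by auto
  ultimately have "c \<in> tree_leaf_nodes V A" using node_cases by (auto simp: tree_leaf_nodes_def)
  with that c reach show ?thesis by blast
qed

lemma npaths_children: "npaths A u v = (if u = v then 1 else 0) + (\<Sum>w\<in>children A u. npaths A w v)"
proof (cases "u = v")
  case True
  have "npaths A w v = 0" if "w \<in> children A u" for w
  proof -
    from that have "(u, w) \<in> A" by (simp add: children_def)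
    then have "(w, u) \<notin> A\<^sup>*" using not_trancl_self[of u] by (meson rtrancl_into_trancl2)
    then show ?thesis using True npaths_eq_0[OF finite_A acyclic_A] by simp
  qed
  then show ?thesis using True npaths_self[OF acyclic_A] by simp
next
  case False
  then show ?thesis using npaths_children_sum[OF finite_A acyclic_A] by simp
qed

lemma npaths_parents:
  assumes "u \<noteq> v"
  shows "npaths A u v = (\<Sum>p\<in>parents A v. npaths A u p)"
proof -
  have "finite (A\<inverse>)" "acyclic (A\<inverse>)" using finite_A acyclic_A by (auto simp: acyclic_converse)
  with assms npaths_children_sum have "npaths (A\<inverse>) v u = (\<Sum>w\<in>children (A\<inverse>) v. npaths (A\<inverse>) w u)"
    by metis
  then show ?thesis by (simp add: npaths_converse[of A] parents_eq_children_converse)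
qed

lemma npaths_to_outside:
  assumes "u \<in> V" "v \<notin> V"
  shows "npaths A u v = 0"
proof (rule npaths_eq_0[OF finite_A acyclic_A])
  show "(u, v) \<notin> A\<^sup>*"
  proof
    assume "(u, v) \<in> A\<^sup>*"
    then show False using assms by (cases rule: rtranclE) (auto dest: arc_nodes)
  qed
qed

lemma npaths_from_Leaf: "Leaf i \<in> V \<Longrightarrow> v \<noteq> Leaf i \<Longrightarrow> npaths A (Leaf i) v = 0"
  using npaths_children[of "Leaf i" v] children_Leaf by simp

lemma mu_children:
  assumes "u \<in> V"
  shows "mu V A u i = trivial_mu A u i + (\<Sum>w\<in>children A u. mu V A w i)"
proof (cases "i = 0")
  case True
  let ?R = "{h\<in>V. is_retic A h}"
  have "mu V A u i = (\<Sum>h\<in>?R. (if u = h then 1 else 0) + (\<Sum>w\<in>children A u. npaths A w h))"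
    using True by (simp add: mu_def npaths_children[of u])
  also have "\<dots> = (\<Sum>h\<in>?R. (if u = h then 1 else 0)) + (\<Sum>h\<in>?R. \<Sum>w\<in>children A u. npaths A w h)"
    by (simp add: sum.distrib)
  also have "(\<Sum>h\<in>?R. (if u = h then 1 else 0)) = (if is_retic A u then 1 else 0)"
    using finite_V assms by (simp add: sum.delta)
  also have "(\<Sum>h\<in>?R. \<Sum>w\<in>children A u. npaths A w h) = (\<Sum>w\<in>children A u. mu V A w i)"
    using True by (simp add: mu_def sum.swap[of _ ?R])
  finally show ?thesis using True by (simp add: trivial_mu_def)
next
  case False
  then show ?thesis by (simp add: mu_def trivial_mu_def npaths_children[of u])
qed

lemma mu_non_taxon: "u \<in> V \<Longrightarrow> i \<noteq> 0 \<Longrightarrow> Leaf i \<notin> V \<Longrightarrow> mu V A u i = 0"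
  using npaths_to_outside by (simp add: mu_def)

lemma mu_beyond_n:
  assumes "u \<in> V" "i > n"
  shows "mu V A u i = 0"
proof -
  have "Leaf i \<notin> V" using Leaf_label_range assms(2) by (meson not_le)
  with assms show ?thesis using mu_non_taxon by simp
qed

lemma mu_nonzero_le: "u \<in> V \<Longrightarrow> mu V A u i \<noteq> 0 \<Longrightarrow> i \<le> n"
  using mu_beyond_n by (meson not_le)

lemma mu_Leaf:
  assumes "Leaf k \<in> V"
  shows "mu V A (Leaf k) = unit_vec k"
proof
  fix i
  have "\<not> is_retic A (Leaf k)" using is_leaf_Leaf[OF assms] leaf_not_retic by blast
  moreover have "k \<noteq> 0" using Leaf_label_range[OF assms] by simp
  ultimately show "mu V A (Leaf k) i = unit_vec k i"
    using mu_children[OF assms, of i] children_Leaf[OF assms]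
    by (auto simp: trivial_mu_def unit_vec_def)
qed

lemma mu_tree_node:
  assumes "v \<in> V" "is_tree_node A v" "children A v = {a, b}" "a \<noteq> b"
  shows "mu V A v x = mu V A a x + mu V A b x"
proof -
  have "trivial_mu A v x = 0"
    using assms(1,2) nonleaf_not_Leaf leaf_not_tree tree_not_retic by (auto simp: trivial_mu_def)
  then show ?thesis using mu_children[OF assms(1), of x] assms(3,4) by simp
qed

lemma mu_retic:
  assumes "v \<in> V" "is_retic A v" "children A v = {c}"
  shows "mu V A v x = unit_vec 0 x + mu V A c x"
proof -
  have "trivial_mu A v x = unit_vec 0 x"
    using assms(1,2) nonleaf_not_Leaf leaf_not_retic by (auto simp: trivial_mu_def unit_vec_def)
  then show ?thesis using mu_children[OF assms(1), of x] assms(3) by simp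
qed

definition leaf_paths :: "node \<Rightarrow> nat" where
  "leaf_paths u = (\<Sum>i\<in>{1..n}. mu V A u i)"

lemma leaf_paths_children:
  assumes "u \<in> V"
  shows "leaf_paths u = (if is_leaf A u then 1 else 0) + (\<Sum>w\<in>children A u. leaf_paths w)"
proof -
  have "leaf_paths u = (\<Sum>i\<in>{1..n}. trivial_mu A u i) + (\<Sum>i\<in>{1..n}. \<Sum>w\<in>children A u. mu V A w i)"
    unfolding leaf_paths_def by (simp add: mu_children[OF assms] sum.distrib)
  also have "(\<Sum>i\<in>{1..n}. trivial_mu A u i) = (\<Sum>i\<in>{1..n}. if u = Leaf i then 1 else 0)"
    by (rule sum.cong) (auto simp: trivial_mu_def)
  also have "\<dots> = (if is_leaf A u then 1 else 0)"
  proof (cases "is_leaf A u")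
    case True
    then obtain k where "u = Leaf k" using leaf_iff_Leaf assms by auto
    moreover from this have "k \<in> {1..n}" using Leaf_label_range assms by auto
    ultimately show ?thesis using True by (simp add: sum.delta)
  next
    case False
    then show ?thesis using leaf_iff_Leaf assms by auto
  qed
  also have "(\<Sum>i\<in>{1..n}. \<Sum>w\<in>children A u. mu V A w i) = (\<Sum>w\<in>children A u. leaf_paths w)"
    unfolding leaf_paths_def by (rule sum.swap)
  finally show ?thesis .
qed

lemma leaf_paths_pos: "u \<in> V \<Longrightarrow> leaf_paths u \<ge> 1"
proof (induction u rule: wf_induct_rule[OF wf_converse_A])
  case (1 u)
  show ?case
  proof (cases "is_leaf A u")
    case True
    then show ?thesis using leaf_paths_children[OF 1(2)] by simp
  next
    case False
    then obtain w where w: "w \<in> children A u" using children_nonleaf[OF 1(2)] by auto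
    then have "leaf_paths w \<ge> 1" using 1(1)[of w] children_subset by (auto simp: children_def)
    moreover have "leaf_paths w \<le> (\<Sum>w\<in>children A u. leaf_paths w)"
      using w finite_children_A by (intro member_le_sum) auto
    ultimately show ?thesis using leaf_paths_children[OF 1(2)] by simp
  qed
qed

lemma leaf_paths_tree_node:
  assumes "u \<in> V" "is_tree_node A u"
  shows "leaf_paths u \<ge> 2"
proof -
  obtain a b where ab: "a \<noteq> b" "children A u = {a, b}" using tree_node_shape(2)[OF assms(2)] by auto
  then have "leaf_paths a \<ge> 1" "leaf_paths b \<ge> 1" using leaf_paths_pos children_subset by auto
  moreover have "\<not> is_leaf A u" using assms(2) leaf_not_tree by blast
  ultimately show ?thesis using leaf_paths_children[OF assms(1)] ab by simp
qed

lemma child_leaf_paths_1: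
  assumes "c \<in> children A u" "leaf_paths c = 1" "mu V A c 0 = 0"
  obtains k where "c = Leaf k" "Leaf k \<in> V"
proof -
  have cV: "c \<in> V" using assms(1) children_subset by auto
  have "\<not> is_root A c" using child_not_root assms(1) by blast
  moreover have "\<not> is_tree_node A c" using leaf_paths_tree_node[OF cV] assms(2) by auto
  moreover have "\<not> is_retic A c"
    using mu_children[OF cV, of 0] assms(3) by (auto simp: trivial_mu_def)
  ultimately have "is_leaf A c" using node_cases[OF cV] by blast
  then show ?thesis using that leaf_iff_Leaf cV by auto
qed

lemma mu_eq_unit_vec:
  assumes "t \<in> tree_leaf_nodes V A" "mu V A t = unit_vec k" "k \<noteq> 0"
  shows "t = Leaf k"
proof -
  have tV: "t \<in> V" using assms(1) tree_leaf_nodesD by auto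
  have "k \<le> n" using mu_nonzero_le[OF tV, of k] assms(2) by (simp add: unit_vec_def)
  then have "leaf_paths t = 1" using assms(2,3) by (simp add: leaf_paths_def unit_vec_def sum.delta)
  then have "\<not> is_tree_node A t" using leaf_paths_tree_node tV by fastforce
  then have "is_leaf A t" using assms(1) by (simp add: tree_leaf_nodes_def)
  then obtain m where m: "t = Leaf m" using leaf_iff_Leaf tV by auto
  then have "unit_vec m k = 1" using mu_Leaf tV assms(2) by (simp add: unit_vec_def)
  then have "m = k" by (simp add: unit_vec_def split: if_split_asm)
  then show ?thesis using m by simp
qed

end

section \<open>Cherries and reticulated cherries\<close>

locale cherry_reduction = phylo_network +
  fixes i j :: nat and p g :: node
  assumes parents_Leaf_i: "parents A (Leaf i) = {p}"
    and parents_Leaf_j: "parents A (Leaf j) = {p}"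
    and children_p: "children A p = {Leaf i, Leaf j}"
    and tree_node_p: "is_tree_node A p"
    and parents_p: "parents A p = {g}"
    and p_in_V: "p \<in> V"
    and i_neq_j: "i \<noteq> j"
    and Leaf_i_in_V: "Leaf i \<in> V"
    and Leaf_j_in_V: "Leaf j \<in> V"

locale ret_cherry_reduction = phylo_network +
  fixes i j :: nat and pi pj q g :: node
  assumes parents_Leaf_i: "parents A (Leaf i) = {pi}"
    and parents_Leaf_j: "parents A (Leaf j) = {pj}"
    and retic_pi: "is_retic A pi"
    and tree_node_pj: "is_tree_node A pj"
    and parents_pi: "parents A pi = {pj, q}"
    and pj_neq_q: "pj \<noteq> q"
    and children_pi: "children A pi = {Leaf i}"
    and children_pj: "children A pj = {Leaf j, pi}"
    and parents_pj: "parents A pj = {g}"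
    and pi_in_V: "pi \<in> V"
    and pj_in_V: "pj \<in> V"
    and q_in_V: "q \<in> V"
    and g_in_V: "g \<in> V"
    and i_neq_j: "i \<noteq> j"
    and Leaf_i_in_V: "Leaf i \<in> V"
    and Leaf_j_in_V: "Leaf j \<in> V"

context phylo_network
begin

lemma parent_of_child:
  assumes "c \<in> children A u" "parents A c = {p}"
  shows "p = u" "parent A c = u"
proof -
  from assms show "p = u" by (auto simp: children_def parents_def)
  with parent_eq[OF assms(2)] show "parent A c = u" by simp
qed

lemma parents_Leaf_singleton: "Leaf i \<in> V \<Longrightarrow> \<exists>p. parents A (Leaf i) = {p}"
  using is_leaf_Leaf leaf_shape by blast

lemma cherry_reductionI:
  assumes "is_cherry (V, A) (i, j)"
  obtains p g where "cherry_reduction n V A i j p g"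
proof -
  have ij: "i \<noteq> j" "Leaf i \<in> V" "Leaf j \<in> V" "parent A (Leaf i) = parent A (Leaf j)"
    using assms by (auto simp: is_cherry_def)
  obtain p where p: "parents A (Leaf i) = {p}" using parents_Leaf_singleton ij by blast
  obtain p' where p': "parents A (Leaf j) = {p'}" using parents_Leaf_singleton ij by blast
  have pj: "parents A (Leaf j) = {p}" using parent_eq[OF p] parent_eq[OF p'] ij p' by simp
  have arcs: "(p, Leaf i) \<in> A" "(p, Leaf j) \<in> A" using p pj by (auto simp: parents_def)
  then have pV: "p \<in> V" using arc_nodes by blast
  have sub: "{Leaf i, Leaf j} \<subseteq> children A p" using arcs by (auto simp: children_def)
  then have "card (children A p) \<ge> 2"
    using card_mono[OF finite_children_A sub] ij by simp
  then have tree: "is_tree_node A p"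
    using node_cases[OF pV]
    by (auto simp: is_root_def is_leaf_def is_retic_def outdeg_eq_card_children)
  then have "children A p = {Leaf i, Leaf j}"
    using card_seteq[OF finite_children_A sub] ij
    by (simp add: is_tree_node_def outdeg_eq_card_children)
  moreover obtain g where "parents A p = {g}" using tree_node_shape(1)[OF tree] by blast
  ultimately have "cherry_reduction n V A i j p g"
    using p pj tree pV ij by unfold_locales
  then show ?thesis by (rule that)
qed

lemma ret_cherry_reductionI:
  assumes "is_ret_cherry (V, A) (i, j)"
  obtains pi pj q g where "ret_cherry_reduction n V A i j pi pj q g"
proof -
  have ij: "i \<noteq> j" "Leaf i \<in> V" "Leaf j \<in> V" "is_retic A (parent A (Leaf i))"
    "is_tree_node A (parent A (Leaf j))" "(parent A (Leaf j), parent A (Leaf i)) \<in> A"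
    using assms by (auto simp: is_ret_cherry_def)
  obtain pi where pi: "parents A (Leaf i) = {pi}" using parents_Leaf_singleton ij by blast
  obtain pj where pj: "parents A (Leaf j) = {pj}" using parents_Leaf_singleton ij by blast
  have types: "is_retic A pi" "is_tree_node A pj" and pj_pi: "(pj, pi) \<in> A"
    using ij parent_eq[OF pi] parent_eq[OF pj] by auto
  have arcs: "(pi, Leaf i) \<in> A" "(pj, Leaf j) \<in> A" using pi pj by (auto simp: parents_def)
  obtain a b where "a \<noteq> b" "parents A pi = {a, b}" using retic_shape(1)[OF types(1)] by blast
  moreover have "pj \<in> parents A pi" using pj_pi by (simp add: parents_def)
  ultimately obtain q where q: "parents A pi = {pj, q}" "pj \<noteq> q" by auto
  obtain c where "children A pi = {c}" using retic_shape(2)[OF types(1)] by blast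
  then have ci: "children A pi = {Leaf i}" using arcs by (auto simp: children_def)
  have "Leaf j \<noteq> pi" using types(1) is_leaf_Leaf ij leaf_not_retic by blast
  moreover have sub: "{Leaf j, pi} \<subseteq> children A pj" using arcs pj_pi by (auto simp: children_def)
  ultimately have cj: "children A pj = {Leaf j, pi}"
    using card_seteq[OF finite_children_A sub] types(2)
    by (simp add: is_tree_node_def outdeg_eq_card_children)
  obtain g where g: "parents A pj = {g}" using tree_node_shape(1)[OF types(2)] by blast
  have "pi \<in> V" "pj \<in> V" "q \<in> V" "g \<in> V"
    using pj_pi arc_nodes parents_subset[of pi] parents_subset[of pj] q g by auto
  then have "ret_cherry_reduction n V A i j pi pj q g"
    using pi pj types q ci cj g ij by unfold_locales
  then show ?thesis by (rule that)
qed

end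

section \<open>Recognising cherries from \<open>\<mu>\<close>-vectors\<close>

context phylo_network
begin

text \<open>Both cherry shapes are detected through a tree node whose \<open>\<mu>\<close>-vector counts one path to
  each of two taxa \<open>i\<close> and \<open>j\<close> and none to any other taxon (\<open>c\<close> may only be nonzero outside
  \<open>{1..n}\<close>): its two children then each reach exactly one leaf.\<close>
lemma tree_node_two_taxa:
  assumes u: "u \<in> tree_leaf_nodes V A"
    and mu_u: "mu V A u = (\<lambda>x. c x + unit_vec i x + unit_vec j x)"
    and c: "\<forall>x\<in>{1..n}. c x = 0" and ij: "i \<noteq> j" "i \<noteq> 0" "j \<noteq> 0"
  obtains a b where "children A u = {a, b}" "a \<noteq> b" "is_tree_node A u"
    "leaf_paths a = 1" "leaf_paths b = 1"
    "\<And>x. mu V A a x + mu V A b x = c x + unit_vec i x + unit_vec j x"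
proof -
  have uV: "u \<in> V" using u tree_leaf_nodesD by blast
  have "i \<le> n" "j \<le> n"
    using mu_nonzero_le[OF uV, of i] mu_nonzero_le[OF uV, of j] mu_u ij by (auto simp: unit_vec_def)
  with c ij have mu_ij: "mu V A u i = 1" "mu V A u j = 1" by (auto simp: mu_u unit_vec_def)
  have "\<not> is_leaf A u"
  proof
    assume "is_leaf A u"
    then obtain k where k: "u = Leaf k" "Leaf k \<in> V" using leaf_iff_Leaf uV by auto
    then have "unit_vec k i = 1" "unit_vec k j = 1" using mu_ij mu_Leaf[OF k(2)] by simp_all
    with ij(1) show False by (cases "i = k") (simp_all add: unit_vec_def)
  qed
  then have tree: "is_tree_node A u" using u by (simp add: tree_leaf_nodes_def)
  obtain a b where ab: "a \<noteq> b" "children A u = {a, b}" using tree_node_shape(2)[OF tree] by blast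
  have leaf_paths_u: "leaf_paths u = 2"
  proof -
    have "leaf_paths u = (\<Sum>x\<in>{1..n}. c x) + (\<Sum>x\<in>{1..n}. unit_vec i x) + (\<Sum>x\<in>{1..n}. unit_vec j x)"
      unfolding leaf_paths_def mu_u by (simp add: sum.distrib)
    with c \<open>i \<le> n\<close> \<open>j \<le> n\<close> ij show ?thesis by (simp add: unit_vec_def sum.delta)
  qed
  have "leaf_paths u = leaf_paths a + leaf_paths b"
    using leaf_paths_children[OF uV] \<open>\<not> is_leaf A u\<close> ab by simp
  moreover have "leaf_paths a \<ge> 1" "leaf_paths b \<ge> 1" using leaf_paths_pos ab children_subset
    by auto
  ultimately have "leaf_paths a = 1" "leaf_paths b = 1" using leaf_paths_u by auto
  moreover have "mu V A a x + mu V A b x = c x + unit_vec i x + unit_vec j x" for x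
    using mu_tree_node[OF uV tree ab(2,1), of x] mu_u by simp
  ultimately show ?thesis using that ab tree by blast
qed

lemma cherry_of_mu:
  assumes u: "u \<in> tree_leaf_nodes V A" and mu_u: "mu V A u = (\<lambda>x. unit_vec i x + unit_vec j x)"
    and ij: "i \<noteq> j" "i \<noteq> 0" "j \<noteq> 0"
  shows "is_cherry (V, A) (i, j)"
proof -
  have mu_u': "mu V A u = (\<lambda>x. 0 + unit_vec i x + unit_vec j x)" using mu_u by simp
  have "\<forall>x\<in>{1..n}. (0::nat) = 0" by simp
  from tree_node_two_taxa[OF u mu_u' this ij]
  obtain a b where ab: "children A u = {a, b}" "leaf_paths a = 1" "leaf_paths b = 1"
    and sum: "\<And>x. mu V A a x + mu V A b x = 0 + unit_vec i x + unit_vec j x"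
    by metis
  have "mu V A a 0 = 0" "mu V A b 0 = 0" using sum[of 0] ij by (auto simp: unit_vec_def)
  moreover have "a \<in> children A u" "b \<in> children A u" using ab(1) by auto
  ultimately obtain ka kb where "a = Leaf ka" "Leaf ka \<in> V" "b = Leaf kb" "Leaf kb \<in> V"
    using child_leaf_paths_1 ab(2,3) by metis
  moreover from this have "ka = i \<and> kb = j \<or> ka = j \<and> kb = i"
    using unit_vec_sum2[OF ij(1)] sum mu_Leaf by simp
  ultimately have L: "Leaf i \<in> children A u" "Leaf j \<in> children A u" "Leaf i \<in> V" "Leaf j \<in> V"
    using ab by auto
  obtain p where "parents A (Leaf i) = {p}" using parents_Leaf_singleton L by blast
  moreover obtain p' where "parents A (Leaf j) = {p'}" using parents_Leaf_singleton L by blast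
  ultimately have "parent A (Leaf i) = u" "parent A (Leaf j) = u" using parent_of_child L by auto
  then show ?thesis using L ij by (simp add: is_cherry_def)
qed

lemma retic_child_leaf_paths_1:
  assumes "c \<in> children A u" "leaf_paths c = 1" "mu V A c 0 = 1"
  obtains k where "is_retic A c" "children A c = {Leaf k}" "Leaf k \<in> V"
    "mu V A c = (\<lambda>x. unit_vec 0 x + unit_vec k x)"
proof -
  have cV: "c \<in> V" using assms(1) children_subset by auto
  have not_leaf: "\<not> is_leaf A c"
  proof
    assume "is_leaf A c"
    then obtain k where k: "c = Leaf k" "Leaf k \<in> V" using leaf_iff_Leaf cV by auto
    then have "mu V A c 0 = unit_vec k 0" using mu_Leaf by simp
    moreover have "k \<noteq> 0" using Leaf_label_range k(2) by force
    ultimately show False using assms(3) by (simp add: unit_vec_def)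
  qed
  moreover have "\<not> is_root A c" using child_not_root assms(1) by blast
  moreover have "\<not> is_tree_node A c" using leaf_paths_tree_node[OF cV] assms(2) by auto
  ultimately have retic: "is_retic A c" using node_cases[OF cV] by blast
  obtain d where d: "children A c = {d}" using retic_shape(2)[OF retic] by blast
  have mu_c: "mu V A c x = unit_vec 0 x + mu V A d x" for x using mu_retic[OF cV retic d] .
  have "leaf_paths c = leaf_paths d"
    using leaf_paths_children[OF cV] d not_leaf by simp
  with assms(2) have "leaf_paths d = 1" by simp
  moreover have "mu V A d 0 = 0" using mu_c[of 0] assms(3) by (simp add: unit_vec_def)
  ultimately obtain k where k: "d = Leaf k" "Leaf k \<in> V" using child_leaf_paths_1 d by blast
  then have "mu V A c = (\<lambda>x. unit_vec 0 x + unit_vec k x)" using mu_c mu_Leaf[OF k(2)] by auto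
  with retic d k show ?thesis by (intro that) auto
qed

lemma ret_cherry_of_children:
  assumes "is_tree_node A u" "children A u = {Leaf a, y}" "Leaf a \<in> V"
    and "is_retic A y" "children A y = {Leaf b}" "Leaf b \<in> V" "a \<noteq> b"
  shows "is_ret_cherry (V, A) (b, a)"
proof -
  obtain pa where "parents A (Leaf a) = {pa}" using parents_Leaf_singleton assms(3) by blast
  moreover obtain pb where "parents A (Leaf b) = {pb}" using parents_Leaf_singleton assms(6)
    by blast
  ultimately have "parent A (Leaf a) = u" "parent A (Leaf b) = y"
    using parent_of_child assms(2,5) by auto
  moreover have "(u, y) \<in> A" using assms(2) by (auto simp: children_def)
  ultimately show ?thesis using assms by (simp add: is_ret_cherry_def)
qed

lemma ret_cherry_of_mu:
  assumes u: "u \<in> tree_leaf_nodes V A"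
    and mu_u: "mu V A u = (\<lambda>x. unit_vec 0 x + unit_vec i x + unit_vec j x)"
    and ij: "i \<noteq> j" "i \<noteq> 0" "j \<noteq> 0"
  shows "is_ret_cherry (V, A) (i, j) \<or> is_ret_cherry (V, A) (j, i)"
proof -
  have "\<forall>x\<in>{1..n}. unit_vec 0 x = 0" by (simp add: unit_vec_def)
  from tree_node_two_taxa[OF u mu_u this ij]
  obtain a b where ab: "children A u = {a, b}" "leaf_paths a = 1" "leaf_paths b = 1"
    "is_tree_node A u"
    and sum: "\<And>x. mu V A a x + mu V A b x = unit_vec 0 x + unit_vec i x + unit_vec j x"
    by metis
  have ab0: "mu V A a 0 + mu V A b 0 = 1" using sum[of 0] ij by (simp add: unit_vec_def)
  obtain x y where xy: "children A u = {x, y}" "leaf_paths x = 1" "leaf_paths y = 1"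
    "mu V A x 0 = 0" "mu V A y 0 = 1"
    and sum_xy: "\<And>z. mu V A x z + mu V A y z = unit_vec 0 z + unit_vec i z + unit_vec j z"
  proof (cases "mu V A a 0 = 0")
    case True
    with ab0 have "mu V A b 0 = 1" by simp
    with True ab sum that[of a b] show ?thesis by blast
  next
    case False
    with ab0 have "mu V A b 0 = 0" "mu V A a 0 = 1" by auto
    moreover have "mu V A b z + mu V A a z = unit_vec 0 z + unit_vec i z + unit_vec j z" for z
      using sum[of z] by linarith
    moreover have "children A u = {b, a}" using ab by auto
    ultimately show ?thesis using ab that[of b a] by blast
  qed
  obtain ka where x: "x = Leaf ka" "Leaf ka \<in> V" using child_leaf_paths_1 xy by blast
  obtain kb where y: "is_retic A y" "children A y = {Leaf kb}" "Leaf kb \<in> V"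
    "mu V A y = (\<lambda>x. unit_vec 0 x + unit_vec kb x)"
    using retic_child_leaf_paths_1[of y u] xy by blast
  have "\<forall>z. unit_vec ka z + unit_vec kb z = unit_vec i z + unit_vec j z"
    using sum_xy x y mu_Leaf by (simp add: algebra_simps)
  then have k: "ka = i \<and> kb = j \<or> ka = j \<and> kb = i" using unit_vec_sum2[OF ij(1)] by blast
  then have "is_ret_cherry (V, A) (kb, ka)"
    using ret_cherry_of_children[OF ab(4) xy(1)[unfolded x(1)] x(2) y(1-3)] ij(1) by auto
  with k show ?thesis by auto
qed

end

lemma children_modify: "children (B - Rm \<union> Ad) v = (children B v - children Rm v) \<union> children Ad v"
  by (auto simp: children_def)

lemma card_children_modify:
  assumes "finite B" "finite Ad" "Rm \<subseteq> B" "Ad \<inter> B = {}"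
    and "card (children Rm v) = card (children Ad v)"
  shows "card (children (B - Rm \<union> Ad) v) = card (children B v)"
proof -
  have sub: "children Rm v \<subseteq> children B v" using assms(3) by (auto simp: children_def)
  have disj: "(children B v - children Rm v) \<inter> children Ad v = {}" using assms(4)
    by (auto simp: children_def)
  have fin: "finite (children B v)" "finite (children Ad v)" using assms finite_children by auto
  have "card (children (B - Rm \<union> Ad) v) =
      card (children B v - children Rm v) + card (children Ad v)"
    unfolding children_modify using disj fin by (simp add: card_Un_disjoint)
  also have "\<dots> = card (children B v) - card (children Rm v) + card (children Ad v)"
    using sub fin by (simp add: card_Diff_subset finite_subset)
  also have "\<dots> = card (children B v)" using assms(5) card_mono[OF fin(1) sub] by simp
  finally show ?thesis .
qed

lemma card_parents_modify:
  assumes "finite B" "finite Ad" "Rm \<subseteq> B" "Ad \<inter> B = {}"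
    and "card (parents Rm v) = card (parents Ad v)"
  shows "card (parents (B - Rm \<union> Ad) v) = card (parents B v)"
proof -
  have "(B - Rm \<union> Ad)\<inverse> = B\<inverse> - Rm\<inverse> \<union> Ad\<inverse>" "Ad\<inverse> \<inter> B\<inverse> = {}"
    using assms(4) by auto
  with card_children_modify[of "B\<inverse>" "Ad\<inverse>" "Rm\<inverse>" v] assms show ?thesis
    by (simp add: parents_eq_children_converse)
qed

lemma node_types_modify:
  assumes "finite B" "finite Ad" "Rm \<subseteq> B" "Ad \<inter> B = {}"
    and "card (children Rm v) = card (children Ad v)" "card (parents Rm v) = card (parents Ad v)"
  shows "is_root (B - Rm \<union> Ad) v = is_root B v" "is_leaf (B - Rm \<union> Ad) v = is_leaf B v"
    "is_tree_node (B - Rm \<union> Ad) v = is_tree_node B v" "is_retic (B - Rm \<union> Ad) v = is_retic B v"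
  using card_children_modify[OF assms(1-5)] card_parents_modify[OF assms(1-4,6)]
  by (simp_all add: is_root_def is_leaf_def is_tree_node_def is_retic_def
      indeg_eq_card_parents outdeg_eq_card_children)

text \<open>Arcs added as shortcuts of existing paths keep the arc relation acyclic; if moreover every
  remaining node keeps its degrees, the result is again a phylogenetic network.\<close>
lemma (in phylo_network) phylo_net_modify:
  assumes "V' \<subseteq> V" "Rm \<subseteq> A" "Ad \<inter> A = {}" "finite Ad" "A - Rm \<union> Ad \<subseteq> V' \<times> V'"
    and "Ad \<subseteq> A\<^sup>+" "the_root \<in> V'"
    and "\<And>v. v \<in> V' \<Longrightarrow> card (children Rm v) = card (children Ad v)"
    and "\<And>v. v \<in> V' \<Longrightarrow> card (parents Rm v) = card (parents Ad v)"
  shows "phylo_net n (V', A - Rm \<union> Ad)"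
proof -
  note types = node_types_modify[OF finite_A assms(4,2,3) assms(8,9)]
  have "(v, v) \<notin> (A - Rm \<union> Ad)\<^sup>+" for v
  proof
    assume "(v, v) \<in> (A - Rm \<union> Ad)\<^sup>+"
    moreover have "A - Rm \<union> Ad \<subseteq> A\<^sup>+" using assms(6) by auto
    ultimately have "(v, v) \<in> (A\<^sup>+)\<^sup>+" using trancl_mono by blast
    then show False using not_trancl_self by simp
  qed
  moreover have "\<exists>!r. r \<in> V' \<and> is_root (A - Rm \<union> Ad) r"
    using assms(1,7) types(1) the_root root_unique by blast
  moreover have "v \<in> V" if "v \<in> V'" for v using that assms(1) by auto
  ultimately show ?thesis unfolding phylo_net_def
    using finite_subset[OF assms(1) finite_V] assms(1,5) types node_cases leaf_iff_Leaf
      labels_subset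
    by auto
qed

section \<open>Reducing a cherry\<close>

context cherry_reduction
begin

definition V_red :: "node set" where
  "V_red = V - {Leaf i, p}"

definition arcs_removed :: "(node \<times> node) set" where
  "arcs_removed = {(p, Leaf i), (p, Leaf j), (g, p)}"

definition arcs_added :: "(node \<times> node) set" where
  "arcs_added = {(g, Leaf j)}"

definition A_red :: "(node \<times> node) set" where
  "A_red = A - arcs_removed \<union> arcs_added"

lemma reduction_arcs: "(p, Leaf i) \<in> A" "(p, Leaf j) \<in> A" "(g, p) \<in> A"
  using parents_Leaf_i parents_Leaf_j parents_p by (auto simp: parents_def)

lemma g_in_V: "g \<in> V"
  using reduction_arcs arc_nodes by blast

lemma labels_nonzero: "i \<noteq> 0" "j \<noteq> 0"
  using Leaf_label_range[OF Leaf_i_in_V] Leaf_label_range[OF Leaf_j_in_V] by auto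

lemma distinct_nodes: "g \<noteq> p" "g \<noteq> Leaf i" "g \<noteq> Leaf j" "p \<noteq> Leaf i" "p \<noteq> Leaf j" "Leaf i \<noteq> Leaf j"
  using reduction_arcs not_trancl_self children_Leaf[OF Leaf_i_in_V] children_Leaf[OF Leaf_j_in_V]
    i_neq_j by (auto simp: children_def)

lemma p_in_tree_leaf_nodes: "p \<in> tree_leaf_nodes V A"
  using p_in_V tree_node_p by (simp add: tree_leaf_nodes_def)

lemma mu_p: "mu V A p = (\<lambda>x. unit_vec i x + unit_vec j x)"
  using mu_tree_node[OF p_in_V tree_node_p children_p] distinct_nodes(6)
    mu_Leaf[OF Leaf_i_in_V] mu_Leaf[OF Leaf_j_in_V] by auto

lemma reduce_eq: "reduce (V, A) (i, j) = (V_red, A_red)"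
proof -
  have parent: "parent A (Leaf i) = p" "parent A (Leaf j) = p"
    using parent_eq parents_Leaf_i parents_Leaf_j by auto
  then have "is_cherry (V, A) (i, j)"
    using i_neq_j Leaf_i_in_V Leaf_j_in_V by (simp add: is_cherry_def)
  moreover have "parent (A - {(p, Leaf i)}) p = g"
    using parents_p distinct_nodes by (intro parent_eq) (auto simp: parents_def)
  moreover have "child (A - {(p, Leaf i)}) p = Leaf j"
    using children_p distinct_nodes by (intro child_eq) (auto simp: children_def)
  ultimately show ?thesis
    unfolding reduce_def using parent
    by (auto simp: suppress_def V_red_def A_red_def arcs_removed_def arcs_added_def Let_def)
qed

lemma removed_added: "finite arcs_added" "arcs_removed \<subseteq> A" "arcs_added \<inter> A = {}"
  using reduction_arcs parents_Leaf_j distinct_nodes(1)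
  by (auto simp: arcs_added_def arcs_removed_def parents_def)

lemma A_eq_red: "A = A_red - arcs_added \<union> arcs_removed"
  using removed_added(2,3) by (auto simp: A_red_def)

lemma V_split: "V = V_red \<union> {p, Leaf i}" "V_red \<inter> {p, Leaf i} = {}"
  using p_in_V Leaf_i_in_V by (auto simp: V_red_def)

lemma A_red_subset: "A_red \<subseteq> V_red \<times> V_red"
proof
  fix e assume "e \<in> A_red"
  moreover obtain u v where "e = (u, v)" by (cases e)
  ultimately have e: "e = (u, v)" "(u, v) \<in> A \<and> (u, v) \<notin> arcs_removed \<or> (u, v) = (g, Leaf j)"
    by (auto simp: A_red_def arcs_added_def)
  show "e \<in> V_red \<times> V_red"
  proof (cases "(u, v) = (g, Leaf j)")
    case True
    then show ?thesis using e g_in_V Leaf_j_in_V distinct_nodes by (auto simp: V_red_def)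
  next
    case False
    with e have arc: "(u, v) \<in> A" "(u, v) \<notin> arcs_removed" by auto
    then have "u \<noteq> Leaf i" "u \<noteq> p" "v \<noteq> Leaf i" "v \<noteq> p"
      using children_Leaf[OF Leaf_i_in_V] children_p parents_Leaf_i parents_p
      by (auto simp: children_def parents_def arcs_removed_def)
    then show ?thesis using e arc arc_nodes by (auto simp: V_red_def)
  qed
qed

lemma root_in_V_red: "the_root \<in> V_red"
  using the_root tree_node_p root_not_tree is_leaf_Leaf[OF Leaf_i_in_V] leaf_not_root
  by (auto simp: V_red_def)

lemma card_removed_added:
  assumes "v \<in> V_red"
  shows "card (children arcs_removed v) = card (children arcs_added v)"
    "card (parents arcs_removed v) = card (parents arcs_added v)"
proof -
  have "v \<noteq> p" "v \<noteq> Leaf i" using assms by (auto simp: V_red_def)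
  then have "children arcs_removed v = (if v = g then {p} else {})"
    "children arcs_added v = (if v = g then {Leaf j} else {})"
    "parents arcs_removed v = (if v = Leaf j then {p} else {})"
    "parents arcs_added v = (if v = Leaf j then {g} else {})"
    by (auto simp: children_def parents_def arcs_removed_def arcs_added_def)
  then show "card (children arcs_removed v) = card (children arcs_added v)"
    "card (parents arcs_removed v) = card (parents arcs_added v)" by simp_all
qed

lemma phylo_network_red: "phylo_network n V_red A_red"
  unfolding phylo_network_def A_red_def
proof (rule phylo_net_modify)
  show "V_red \<subseteq> V" by (auto simp: V_red_def)
  show "A - arcs_removed \<union> arcs_added \<subseteq> V_red \<times> V_red" using A_red_subset by (simp add: A_red_def)
  show "arcs_added \<subseteq> A\<^sup>+" using reduction_arcs
    by (auto simp: arcs_added_def intro: trancl_into_trancl)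
qed (use removed_added root_in_V_red card_removed_added in auto)

sublocale red: phylo_network n V_red A_red
  by (rule phylo_network_red)

lemma node_types_red:
  assumes "v \<in> V_red"
  shows "is_root A_red v = is_root A v" "is_leaf A_red v = is_leaf A v"
    "is_tree_node A_red v = is_tree_node A v" "is_retic A_red v = is_retic A v"
  unfolding A_red_def
  by (rule node_types_modify[OF finite_A removed_added card_removed_added[OF assms]])+

lemma children_red:
  "v \<in> V_red \<Longrightarrow> children A_red v = (if v = g then children A g - {p} \<union> {Leaf j} else children A v)"
  unfolding A_red_def children_modify
  by (auto simp: children_def arcs_removed_def arcs_added_def V_red_def)

text \<open>Paths through \<open>p\<close> can only continue to \<open>Leaf j\<close>, which is exactly where the new arc leads.\<close>
lemma npaths_red: "u \<in> V_red \<Longrightarrow> v \<in> V_red \<Longrightarrow> npaths A_red u v = npaths A u v"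
proof (induction u rule: wf_induct_rule[OF red.wf_converse_A])
  case (1 u)
  show ?case
  proof (cases "u = v")
    case True
    then show ?thesis using npaths_self[OF acyclic_A] npaths_self[OF red.acyclic_A] by simp
  next
    case False
    have "npaths A_red u v = (\<Sum>w\<in>children A_red u. npaths A w v)"
      unfolding npaths_children_sum[OF red.finite_A red.acyclic_A False]
      using 1 red.children_subset by (intro sum.cong) (auto simp: children_def)
    also have "\<dots> = npaths A u v"
    proof (cases "u = g")
      case True
      have p_child: "p \<in> children A g" and "Leaf j \<notin> children A g - {p}"
        using reduction_arcs removed_added(3) by (auto simp: children_def arcs_added_def)
      then have "(\<Sum>w\<in>children A_red u. npaths A w v)
          = (\<Sum>w\<in>children A g - {p}. npaths A w v) + npaths A (Leaf j) v"
        using True children_red[OF 1(2)] finite_children_A by (simp add: sum.insert_if)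
      moreover have "npaths A u v = (\<Sum>w\<in>children A g - {p}. npaths A w v) + npaths A p v"
        using npaths_children_sum[OF finite_A acyclic_A False] True
          sum.remove[OF finite_children_A p_child]
        by (simp add: add.commute)
      moreover have "npaths A p v = npaths A (Leaf j) v"
        using npaths_children_sum[OF finite_A acyclic_A, of p v] children_p distinct_nodes 1(3)
          npaths_from_Leaf[OF Leaf_i_in_V] by (auto simp: V_red_def)
      ultimately show ?thesis by simp
    next
      case False
      then show ?thesis
        using children_red[OF 1(2)] npaths_children_sum[OF finite_A acyclic_A \<open>u \<noteq> v\<close>]
        by simp
    qed
    finally show ?thesis .
  qed
qed

lemma mu_red:
  assumes "u \<in> V_red"
  shows "mu V_red A_red u = (mu V A u)(i := 0)"
proof
  fix k
  have uV: "u \<in> V" using assms by (simp add: V_red_def)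
  have "{h\<in>V_red. is_retic A_red h} = {h\<in>V. is_retic A h}"
    using node_types_red(4) tree_node_p tree_not_retic is_leaf_Leaf[OF Leaf_i_in_V] leaf_not_retic
    by (auto simp: V_red_def)
  then have "mu V_red A_red u 0 = mu V A u 0"
    using npaths_red[OF assms] by (auto simp: mu_def V_red_def intro: sum.cong)
  moreover have "mu V_red A_red u i = 0"
    using red.mu_non_taxon[OF assms] labels_nonzero by (simp add: V_red_def)
  moreover have "mu V_red A_red u k = mu V A u k" if "k \<noteq> 0" "k \<noteq> i"
  proof (cases "Leaf k \<in> V_red")
    case True
    then show ?thesis using npaths_red[OF assms True] that by (simp add: mu_def)
  next
    case False
    have "Leaf k \<noteq> p" using nonleaf_not_Leaf[OF p_in_V] tree_node_p leaf_not_tree by blast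
    with False that have "Leaf k \<notin> V" by (auto simp: V_red_def)
    then show ?thesis using red.mu_non_taxon[OF assms that(1) False] mu_non_taxon[OF uV that(1)]
      by simp
  qed
  ultimately show "mu V_red A_red u k = ((mu V A u)(i := 0)) k" using labels_nonzero by auto
qed

lemma tree_leaf_nodes_red: "tree_leaf_nodes V_red A_red = tree_leaf_nodes V A - {Leaf i, p}"
  using node_types_red by (auto simp: tree_leaf_nodes_def V_red_def)

lemma mu_red_nonzero: "u \<in> V_red \<Longrightarrow> mu V_red A_red u \<noteq> (\<lambda>_. 0)"
  using red.leaf_paths_pos[of u] by (auto simp: red.leaf_paths_def)

text \<open>Reducing the cherry deletes coordinate \<open>i\<close>: the vector of \<open>Leaf i\<close> vanishes, and that of \<open>p\<close>
  becomes the vector of \<open>Leaf j\<close>, which is still present.\<close>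
lemma mu_set_red: "mu_set V_red A_red = (\<lambda>f. f(i := 0)) ` mu_set V A - {\<lambda>_. 0}"
proof (intro equalityI subsetI)
  fix y assume "y \<in> mu_set V_red A_red"
  then obtain u where u: "u \<in> tree_leaf_nodes V_red A_red" "y = mu V_red A_red u"
    by (auto simp: mu_set_def)
  then have "u \<in> V_red" by (simp add: tree_leaf_nodes_def)
  with u show "y \<in> (\<lambda>f. f(i := 0)) ` mu_set V A - {\<lambda>_. 0}"
    using mu_red mu_red_nonzero tree_leaf_nodes_red by (auto simp: mu_set_def)
next
  fix y assume "y \<in> (\<lambda>f. f(i := 0)) ` mu_set V A - {\<lambda>_. 0}"
  then obtain u where u: "u \<in> tree_leaf_nodes V A" "y = (mu V A u)(i := 0)" "y \<noteq> (\<lambda>_. 0)"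
    by (auto simp: mu_set_def)
  have Leaf_j: "Leaf j \<in> tree_leaf_nodes V_red A_red" "mu V_red A_red (Leaf j) = unit_vec j"
    using tree_leaf_nodes_red Leaf_j_in_V is_leaf_Leaf distinct_nodes red.mu_Leaf
    by (auto simp: tree_leaf_nodes_def V_red_def)
  consider "u = Leaf i" | "u = p" | "u \<in> tree_leaf_nodes V_red A_red"
    using u(1) tree_leaf_nodes_red by blast
  then show "y \<in> mu_set V_red A_red"
  proof cases
    case 1
    then have "y = (\<lambda>_. 0)" using u(2) mu_Leaf[OF Leaf_i_in_V] by (auto simp: unit_vec_def)
    with u(3) show ?thesis by simp
  next
    case 2
    then have "y = unit_vec j" using u(2) mu_p i_neq_j by (auto simp: unit_vec_def)
    with Leaf_j show ?thesis unfolding mu_set_def by (metis image_eqI)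
  next
    case 3
    then show ?thesis using u(2) mu_red by (auto simp: mu_set_def tree_leaf_nodes_def)
  qed
qed

lemma parents_red_Leaf_j: "parents A_red (Leaf j) = {g}"
  using parents_Leaf_j distinct_nodes
  by (auto simp: parents_def A_red_def arcs_removed_def arcs_added_def)

end

section \<open>Reducing a reticulated cherry\<close>

text \<open>The effect of reducing the reticulated cherry \<open>(i, j)\<close> on \<open>\<mu>\<close>-vectors: paths to the
  suppressed reticulation \<open>pi\<close> no longer count in coordinate \<open>0\<close>, and the paths to \<open>Leaf i\<close>
  through \<open>pj\<close> disappear; there are as many of either kind as paths to \<open>Leaf i\<close> resp. \<open>Leaf j\<close>.\<close>
definition ret_cherry_mu :: "nat \<Rightarrow> nat \<Rightarrow> (nat \<Rightarrow> nat) \<Rightarrow> nat \<Rightarrow> nat" where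
  "ret_cherry_mu i j f = f(0 := f 0 - f i, i := f i - f j)"

context ret_cherry_reduction
begin

definition V_red :: "node set" where
  "V_red = V - {pi, pj}"

definition arcs_removed :: "(node \<times> node) set" where
  "arcs_removed = {(pj, pi), (q, pi), (pi, Leaf i), (g, pj), (pj, Leaf j)}"

definition arcs_added :: "(node \<times> node) set" where
  "arcs_added = {(q, Leaf i), (g, Leaf j)}"

definition A_red :: "(node \<times> node) set" where
  "A_red = A - arcs_removed \<union> arcs_added"

lemma reduction_arcs:
  "(pj, pi) \<in> A" "(q, pi) \<in> A" "(pi, Leaf i) \<in> A" "(g, pj) \<in> A" "(pj, Leaf j) \<in> A"
  using parents_Leaf_i parents_Leaf_j parents_pi parents_pj by (auto simp: parents_def)

lemma labels_nonzero: "i \<noteq> 0" "j \<noteq> 0"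
  using Leaf_label_range[OF Leaf_i_in_V] Leaf_label_range[OF Leaf_j_in_V] by auto

lemma not_Leaf: "pi \<noteq> Leaf k" "pj \<noteq> Leaf k"
  using nonleaf_not_Leaf[OF pi_in_V] nonleaf_not_Leaf[OF pj_in_V]
    retic_pi tree_node_pj leaf_not_retic leaf_not_tree by blast+

lemma distinct_nodes: "pi \<noteq> pj" "q \<noteq> pi" "g \<noteq> pj" "g \<noteq> pi"
  "q \<noteq> Leaf i" "q \<noteq> Leaf j" "g \<noteq> Leaf i" "g \<noteq> Leaf j" "Leaf i \<noteq> Leaf j"
proof -
  show "pi \<noteq> pj" using retic_pi tree_node_pj tree_not_retic by blast
  show "q \<noteq> pi" "g \<noteq> pj" using reduction_arcs(2,4) not_trancl_self by blast+
  have "(pi, pi) \<in> A\<^sup>+" if "g = pi" using that reduction_arcs(1,4) by auto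
  then show "g \<noteq> pi" using not_trancl_self by blast
  show "q \<noteq> Leaf i" "q \<noteq> Leaf j" "g \<noteq> Leaf i" "g \<noteq> Leaf j"
    using reduction_arcs(2,4) children_Leaf[OF Leaf_i_in_V] children_Leaf[OF Leaf_j_in_V]
    by (auto simp: children_def)
  show "Leaf i \<noteq> Leaf j" using i_neq_j by simp
qed

lemma pj_in_tree_leaf_nodes: "pj \<in> tree_leaf_nodes V A"
  using pj_in_V tree_node_pj by (simp add: tree_leaf_nodes_def)

lemma mu_pi: "mu V A pi = (\<lambda>x. unit_vec 0 x + unit_vec i x)"
  using mu_retic[OF pi_in_V retic_pi children_pi] mu_Leaf[OF Leaf_i_in_V] by auto

lemma mu_pj: "mu V A pj = (\<lambda>x. unit_vec 0 x + unit_vec i x + unit_vec j x)"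
  using mu_tree_node[OF pj_in_V tree_node_pj children_pj not_Leaf(1)[symmetric]]
    mu_pi mu_Leaf[OF Leaf_j_in_V] by (auto simp: add_ac)

text \<open>Every path to \<open>Leaf j\<close> passes through \<open>pj\<close> and then extends through \<open>pi\<close> to \<open>Leaf i\<close>.\<close>
lemma ret_cherry_mu_le:
  assumes "x \<in> tree_leaf_nodes V A" "x \<noteq> Leaf j"
  shows "mu V A x j \<le> mu V A x i"
proof (cases "x = Leaf i")
  case True
  then show ?thesis using mu_Leaf[OF Leaf_i_in_V] i_neq_j by (simp add: unit_vec_def)
next
  case False
  have "x \<noteq> pi" using assms(1) retic_pi tree_leaf_nodesD by blast
  then have "mu V A x i = npaths A x pj + npaths A x q"
    using npaths_parents[OF False] npaths_parents[of x pi] parents_Leaf_i parents_pi pj_neq_q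
      labels_nonzero by (simp add: mu_def)
  moreover have "mu V A x j = npaths A x pj"
    using npaths_parents[OF assms(2)] parents_Leaf_j labels_nonzero by (simp add: mu_def)
  ultimately show ?thesis by simp
qed

text \<open>The child of the root reaches \<open>q\<close>, which has a path to \<open>Leaf i\<close> avoiding \<open>pj\<close>.\<close>
lemma ret_cherry_mu_less:
  obtains t where "t \<in> tree_leaf_nodes V A" "\<not> is_leaf A t" "mu V A t j < mu V A t i"
proof -
  obtain c where c: "children A the_root = {c}" "c \<in> tree_leaf_nodes V A"
    "\<And>v. v \<in> V \<Longrightarrow> v \<noteq> the_root \<Longrightarrow> (c, v) \<in> A\<^sup>*"
    using root_child by blast
  have "q \<noteq> the_root"
  proof
    assume "q = the_root"
    then have "pi = c" using c(1) reduction_arcs(2) by (auto simp: children_def)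
    then show False using c(2) retic_pi tree_leaf_nodesD by blast
  qed
  then have cq: "(c, q) \<in> A\<^sup>*" using c(3) q_in_V by blast
  have not_leaf: "\<not> is_leaf A c"
  proof
    assume "is_leaf A c"
    then have no_children: "children A c = {}" using leaf_shape by blast
    from cq have "c = q"
      by (cases rule: converse_rtranclE) (use no_children in \<open>auto simp: children_def\<close>)
    then show False using no_children reduction_arcs(2) by (auto simp: children_def)
  qed
  have "c \<noteq> Leaf i" "c \<noteq> Leaf j" using not_leaf is_leaf_Leaf Leaf_i_in_V Leaf_j_in_V by auto
  moreover have "c \<noteq> pi" using c(2) retic_pi tree_leaf_nodesD by blast
  ultimately have "mu V A c i = npaths A c pj + npaths A c q" "mu V A c j = npaths A c pj"
    using npaths_parents[of c] parents_Leaf_i parents_Leaf_j parents_pi pj_neq_q labels_nonzero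
    by (simp_all add: mu_def)
  moreover have "npaths A c q > 0" using npaths_pos_iff[OF finite_A acyclic_A] cq by simp
  ultimately show ?thesis using that c(2) not_leaf by simp
qed

lemma reduce_eq: "reduce (V, A) (i, j) = (V_red, A_red)"
proof -
  have parent: "parent A (Leaf i) = pi" "parent A (Leaf j) = pj"
    using parent_eq parents_Leaf_i parents_Leaf_j by auto
  then have "\<not> is_cherry (V, A) (i, j)" using distinct_nodes(1) by (simp add: is_cherry_def)
  moreover have "is_ret_cherry (V, A) (i, j)"
    using parent retic_pi tree_node_pj reduction_arcs(1) i_neq_j Leaf_i_in_V Leaf_j_in_V
    by (simp add: is_ret_cherry_def)
  moreover
  let ?A1 = "A - {(pj, pi)}"
  let ?A2 = "?A1 - {(q, pi), (pi, Leaf i)} \<union> {(q, Leaf i)}"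
  have "parents ?A1 pi = {q}" "children ?A1 pi = {Leaf i}"
    using parents_pi pj_neq_q children_pi distinct_nodes(1) by (auto simp: parents_def children_def)
  then have "suppress (V, ?A1) pi = (V - {pi}, ?A2)" by (simp add: suppress_def parent_eq child_eq)
  moreover have "parents ?A2 pj = {g}" "children ?A2 pj = {Leaf j}"
    using parents_pj children_pj pj_neq_q distinct_nodes not_Leaf
    by (auto simp: parents_def children_def)
  then have "suppress (V - {pi}, ?A2) pj = (V_red, A_red)"
    using distinct_nodes not_Leaf
    by (auto simp: suppress_def parent_eq child_eq V_red_def A_red_def
        arcs_removed_def arcs_added_def)
  ultimately show ?thesis unfolding reduce_def using parent by (simp add: Let_def)
qed

lemma removed_added: "finite arcs_added" "arcs_removed \<subseteq> A" "arcs_added \<inter> A = {}"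
  using reduction_arcs parents_Leaf_i parents_Leaf_j distinct_nodes not_Leaf
  by (auto simp: arcs_added_def arcs_removed_def parents_def)

lemma A_eq_red: "A = A_red - arcs_added \<union> arcs_removed"
  using removed_added(2,3) by (auto simp: A_red_def)

lemma V_split: "V = V_red \<union> {pi, pj}" "V_red \<inter> {pi, pj} = {}"
  using pi_in_V pj_in_V by (auto simp: V_red_def)

lemma Leaves_in_V_red: "Leaf i \<in> V_red" "Leaf j \<in> V_red"
  using Leaf_i_in_V Leaf_j_in_V not_Leaf by (auto simp: V_red_def)

lemma A_red_subset: "A_red \<subseteq> V_red \<times> V_red"
proof
  fix e assume "e \<in> A_red"
  moreover obtain u v where "e = (u, v)" by (cases e)
  ultimately have e: "e = (u, v)"
    "(u, v) \<in> A \<and> (u, v) \<notin> arcs_removed \<or> (u, v) = (q, Leaf i) \<or> (u, v) = (g, Leaf j)"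
    by (auto simp: A_red_def arcs_added_def)
  show "e \<in> V_red \<times> V_red"
  proof (cases "(u, v) \<in> A \<and> (u, v) \<notin> arcs_removed")
    case True
    then have "u \<noteq> pi" "u \<noteq> pj" "v \<noteq> pi" "v \<noteq> pj"
      using children_pi children_pj parents_pi parents_pj
      by (auto simp: children_def parents_def arcs_removed_def)
    then show ?thesis using e True arc_nodes by (auto simp: V_red_def)
  next
    case False
    then show ?thesis using e q_in_V g_in_V Leaves_in_V_red pj_neq_q distinct_nodes
      by (auto simp: V_red_def)
  qed
qed

lemma root_in_V_red: "the_root \<in> V_red"
  using the_root retic_pi tree_node_pj root_not_retic root_not_tree by (auto simp: V_red_def)

lemma card_removed_added:
  assumes "v \<in> V_red"
  shows "card (children arcs_removed v) = card (children arcs_added v)"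
    "card (parents arcs_removed v) = card (parents arcs_added v)"
proof -
  have "v \<noteq> pi" "v \<noteq> pj" using assms by (auto simp: V_red_def)
  then have e:
    "children arcs_removed v = (if v = q then {pi} else {}) \<union> (if v = g then {pj} else {})"
    "children arcs_added v = (if v = q then {Leaf i} else {}) \<union> (if v = g then {Leaf j} else {})"
    "parents arcs_removed v = (if v = Leaf i then {pi} else {}) \<union> (if v = Leaf j then {pj} else {})"
    "parents arcs_added v = (if v = Leaf i then {q} else {}) \<union> (if v = Leaf j then {g} else {})"
    by (auto simp: children_def parents_def arcs_removed_def arcs_added_def)
  show "card (children arcs_removed v) = card (children arcs_added v)"
    unfolding e using distinct_nodes by (cases "v = q"; cases "v = g") auto
  show "card (parents arcs_removed v) = card (parents arcs_added v)"
    unfolding e using distinct_nodes not_Leaf by (cases "v = Leaf i"; cases "v = Leaf j") auto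
qed

lemma phylo_network_red: "phylo_network n V_red A_red"
  unfolding phylo_network_def A_red_def
proof (rule phylo_net_modify)
  show "V_red \<subseteq> V" by (auto simp: V_red_def)
  show "A - arcs_removed \<union> arcs_added \<subseteq> V_red \<times> V_red" using A_red_subset by (simp add: A_red_def)
  show "arcs_added \<subseteq> A\<^sup>+" using reduction_arcs
    by (auto simp: arcs_added_def intro: trancl_into_trancl)
qed (use removed_added root_in_V_red card_removed_added in auto)

sublocale red: phylo_network n V_red A_red
  by (rule phylo_network_red)

lemma node_types_red:
  assumes "v \<in> V_red"
  shows "is_root A_red v = is_root A v" "is_leaf A_red v = is_leaf A v"
    "is_tree_node A_red v = is_tree_node A v" "is_retic A_red v = is_retic A v"
  unfolding A_red_def
  by (rule node_types_modify[OF finite_A removed_added card_removed_added[OF assms]])+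

lemma children_pi_pj:
  assumes "u \<in> V_red"
  shows "pi \<in> children A u \<longleftrightarrow> u = q" "pj \<in> children A u \<longleftrightarrow> u = g"
proof -
  have "pi \<in> children A u \<longleftrightarrow> u \<in> parents A pi" "pj \<in> children A u \<longleftrightarrow> u \<in> parents A pj"
    by (simp_all add: children_def parents_def)
  then show "pi \<in> children A u \<longleftrightarrow> u = q" "pj \<in> children A u \<longleftrightarrow> u = g"
    using assms parents_pi parents_pj by (auto simp: V_red_def)
qed

lemma children_red:
  assumes "u \<in> V_red"
  shows "children A_red u =
    (children A u - {pi, pj}) \<union> (if u = q then {Leaf i} else {}) \<union> (if u = g then {Leaf j} else {})"
proof -
  have "children arcs_removed u = children A u \<inter> {pi, pj}"
    using assms children_pi_pj[OF assms] by (auto simp: children_def arcs_removed_def V_red_def)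
  moreover have
    "children arcs_added u = (if u = q then {Leaf i} else {}) \<union> (if u = g then {Leaf j} else {})"
    by (auto simp: children_def arcs_added_def)
  ultimately show ?thesis unfolding A_red_def children_modify by auto
qed

lemma sum_children:
  assumes "u \<in> V_red"
  shows "(\<Sum>w\<in>children A u. F w) =
    (\<Sum>w\<in>children A u - {pi, pj}. F w) + (if u = q then F pi else 0) + (if u = g then F pj else 0)"
proof -
  have "(\<Sum>w\<in>children A u. F w) =
      (\<Sum>w\<in>children A u - children A u \<inter> {pi, pj}. F w) + (\<Sum>w\<in>children A u \<inter> {pi, pj}. F w)"
    by (rule sum.subset_diff) (simp_all add: finite_children_A)
  moreover have "children A u - children A u \<inter> {pi, pj} = children A u - {pi, pj}" by blast
  moreover have "(\<Sum>w\<in>children A u \<inter> {pi, pj}. F w) =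
      (\<Sum>w\<in>{pi, pj}. if w \<in> children A u then F w else 0)"
    by (simp add: sum.inter_restrict[symmetric] Int_commute)
  ultimately show ?thesis using children_pi_pj[OF assms] distinct_nodes(1) by (simp add: add.assoc)
qed

lemma sum_children_red:
  assumes "u \<in> V_red"
  shows "(\<Sum>w\<in>children A_red u. F w) = (\<Sum>w\<in>children A u - {pi, pj}. F w)
    + (if u = q then F (Leaf i) else 0) + (if u = g then F (Leaf j) else 0)"
proof -
  have "Leaf i \<notin> children A u" "Leaf j \<notin> children A u"
    using assms parents_Leaf_i parents_Leaf_j by (auto simp: children_def parents_def V_red_def)
  then show ?thesis unfolding children_red[OF assms] using finite_children_A distinct_nodes(9)
    by (cases "u = q"; cases "u = g") (simp_all add: sum.insert_if add_ac)
qed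

lemma npaths_pi: "v \<noteq> pi \<Longrightarrow> npaths A pi v = npaths A (Leaf i) v"
  using npaths_children_sum[OF finite_A acyclic_A, of pi v] children_pi by simp

lemma npaths_pj: "v \<noteq> pj \<Longrightarrow> npaths A pj v = npaths A (Leaf j) v + npaths A pi v"
  using npaths_children_sum[OF finite_A acyclic_A, of pj v] children_pj not_Leaf(1)[of j, symmetric]
  by simp

lemma npaths_red:
  assumes "u \<in> V_red" "v \<in> V_red" "v \<noteq> Leaf i"
  shows "npaths A_red u v = npaths A u v"
  using assms(1)
proof (induction u rule: wf_induct_rule[OF red.wf_converse_A])
  case (1 u)
  show ?case
  proof (cases "u = v")
    case True
    then show ?thesis using npaths_self[OF acyclic_A] npaths_self[OF red.acyclic_A] by simp
  next
    case False
    have v: "v \<noteq> pi" "v \<noteq> pj" using assms(2) by (auto simp: V_red_def)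
    have "npaths A pi v = 0" using npaths_pi[OF v(1)] npaths_from_Leaf[OF Leaf_i_in_V assms(3)]
      by simp
    moreover have "npaths A_red (Leaf j) v = npaths A (Leaf j) v"
      using npaths_self[OF acyclic_A] npaths_self[OF red.acyclic_A] npaths_from_Leaf[OF Leaf_j_in_V]
        red.npaths_from_Leaf[OF Leaves_in_V_red(2)] by (cases "v = Leaf j") auto
    ultimately have Leaves:
      "npaths A_red (Leaf i) v = npaths A pi v" "npaths A_red (Leaf j) v = npaths A pj v"
      using red.npaths_from_Leaf[OF Leaves_in_V_red(1) assms(3)] npaths_pj[OF v(2)] by simp_all
    have "w \<in> children A_red u" if "w \<in> children A u - {pi, pj}" for w
      using that children_red[OF 1(2)] by auto
    then have "(\<Sum>w\<in>children A u - {pi, pj}. npaths A_red w v) =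
        (\<Sum>w\<in>children A u - {pi, pj}. npaths A w v)"
      using 1 red.children_subset by (intro sum.cong) (auto simp: children_def)
    then show ?thesis
      unfolding npaths_children_sum[OF red.finite_A red.acyclic_A False]
        npaths_children_sum[OF finite_A acyclic_A False] sum_children_red[OF 1(2)]
        sum_children[OF 1(2)] Leaves
      by simp
  qed
qed

text \<open>The paths from \<open>u\<close> to \<open>Leaf i\<close> through \<open>pj\<close> are lost; the others are rerouted through the
  new arc \<open>q \<rightarrow> Leaf i\<close>.\<close>
lemma npaths_red_Leaf_i:
  assumes "u \<in> V_red"
  shows "npaths A_red u (Leaf i) + npaths A u pj = npaths A u (Leaf i)"
  using assms
proof (induction u rule: wf_induct_rule[OF red.wf_converse_A])
  case (1 u)
  show ?case
  proof (cases "u = Leaf i")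
    case True
    then show ?thesis
      using npaths_self[OF acyclic_A] npaths_self[OF red.acyclic_A] npaths_from_Leaf[OF Leaf_i_in_V]
        not_Leaf
      by simp
  next
    case False
    have "u \<noteq> pj" using 1(2) by (simp add: V_red_def)
    have "(pi, pj) \<notin> A\<^sup>*" using reduction_arcs(1) not_trancl_self by (meson rtrancl_into_trancl2)
    then have "npaths A pi pj = 0" by (rule npaths_eq_0[OF finite_A acyclic_A])
    moreover have pi_Leaf_i: "npaths A pi (Leaf i) = 1"
      using npaths_pi[OF not_Leaf(1)[of i, symmetric]] npaths_self[OF acyclic_A] by simp
    moreover have "npaths A pj (Leaf i) = 1"
      using npaths_pj[OF not_Leaf(2)[of i, symmetric]] pi_Leaf_i
        npaths_from_Leaf[OF Leaf_j_in_V distinct_nodes(9)] by simp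
    moreover have "npaths A_red (Leaf j) (Leaf i) = 0"
      using red.npaths_from_Leaf Leaves_in_V_red distinct_nodes(9) by simp
    moreover have "w \<in> children A_red u" if "w \<in> children A u - {pi, pj}" for w
      using that children_red[OF 1(2)] by auto
    then have "(\<Sum>w\<in>children A u - {pi, pj}. npaths A_red w (Leaf i))
        + (\<Sum>w\<in>children A u - {pi, pj}. npaths A w pj)
        = (\<Sum>w\<in>children A u - {pi, pj}. npaths A w (Leaf i))"
      using 1 red.children_subset unfolding sum.distrib[symmetric]
      by (intro sum.cong) (auto simp: children_def)
    ultimately show ?thesis
      unfolding npaths_children_sum[OF red.finite_A red.acyclic_A False]
        npaths_children_sum[OF finite_A acyclic_A False]
        npaths_children_sum[OF finite_A acyclic_A \<open>u \<noteq> pj\<close>]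
        sum_children_red[OF 1(2)] sum_children[OF 1(2)]
      using npaths_self[OF acyclic_A] npaths_self[OF red.acyclic_A] by auto
  qed
qed

lemma mu_red_0:
  assumes "u \<in> V_red"
  shows "mu V_red A_red u 0 = mu V A u 0 - npaths A u pi"
proof -
  have retics: "{h\<in>V_red. is_retic A_red h} = {h\<in>V. is_retic A h} - {pi}"
    using node_types_red(4) tree_node_pj tree_not_retic by (auto simp: V_red_def)
  have "mu V_red A_red u 0 = (\<Sum>h\<in>{h\<in>V. is_retic A h} - {pi}. npaths A_red u h)"
    unfolding mu_def retics by simp
  also have "\<dots> = (\<Sum>h\<in>{h\<in>V. is_retic A h} - {pi}. npaths A u h)"
  proof (rule sum.cong)
    fix h assume h: "h \<in> {h\<in>V. is_retic A h} - {pi}"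
    then have "h \<in> V_red" using tree_node_pj tree_not_retic by (auto simp: V_red_def)
    moreover have "h \<noteq> Leaf i" using h is_leaf_Leaf[OF Leaf_i_in_V] leaf_not_retic by blast
    ultimately show "npaths A_red u h = npaths A u h" by (rule npaths_red[OF assms])
  qed simp
  also have "\<dots> = mu V A u 0 - npaths A u pi"
    using sum.remove[of "{h\<in>V. is_retic A h}" pi "npaths A u"] finite_V pi_in_V retic_pi
    by (simp add: mu_def)
  finally show ?thesis .
qed

lemma mu_red_i: "u \<in> V_red \<Longrightarrow> mu V_red A_red u i = mu V A u i - npaths A u pj"
  using npaths_red_Leaf_i[of u] labels_nonzero by (simp add: mu_def)

lemma mu_red_other:
  assumes "u \<in> V_red" "k \<noteq> 0" "k \<noteq> i"
  shows "mu V_red A_red u k = mu V A u k"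
proof (cases "Leaf k \<in> V_red")
  case True
  then show ?thesis using npaths_red[OF assms(1) True] assms(2,3) by (simp add: mu_def)
next
  case False
  then have "Leaf k \<notin> V" using not_Leaf by (auto simp: V_red_def)
  then show ?thesis using red.mu_non_taxon[OF assms(1,2) False] mu_non_taxon assms V_split by auto
qed

lemma mu_red:
  assumes "u \<in> V_red"
  shows "mu V_red A_red u = ret_cherry_mu i j (mu V A u)"
proof (cases "\<exists>k. u = Leaf k")
  case True
  then obtain k where k: "u = Leaf k" "Leaf k \<in> V" using assms by (auto simp: V_red_def)
  moreover have "k \<noteq> 0" using Leaf_label_range[OF k(2)] by simp
  ultimately show ?thesis using mu_Leaf red.mu_Leaf assms labels_nonzero i_neq_j
    by (auto simp: ret_cherry_mu_def unit_vec_def fun_eq_iff)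
next
  case False
  then have "npaths A u pi = mu V A u i" "npaths A u pj = mu V A u j"
    using npaths_parents parents_Leaf_i parents_Leaf_j labels_nonzero by (auto simp: mu_def)
  then show ?thesis
    using mu_red_0[OF assms] mu_red_i[OF assms] mu_red_other[OF assms]
    by (auto simp: ret_cherry_mu_def fun_eq_iff)
qed

lemma tree_leaf_nodes_red: "tree_leaf_nodes V_red A_red = tree_leaf_nodes V A - {pj}"
proof -
  have "\<not> is_leaf A pi" "\<not> is_tree_node A pi" using retic_pi leaf_not_retic tree_not_retic by blast+
  then show ?thesis using node_types_red by (auto simp: tree_leaf_nodes_def V_red_def)
qed

text \<open>Only the vector of \<open>pj\<close> disappears, and \<open>ret_cherry_mu\<close> maps it to that of \<open>Leaf j\<close>.\<close>
lemma mu_set_red: "mu_set V_red A_red = ret_cherry_mu i j ` mu_set V A"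
proof -
  let ?T = "tree_leaf_nodes V A - {pj}" and ?f = "\<lambda>u. ret_cherry_mu i j (mu V A u)"
  have "?T \<subseteq> V_red" using tree_leaf_nodes_red[symmetric] by (auto simp: tree_leaf_nodes_def)
  then have "mu_set V_red A_red = ?f ` ?T"
    unfolding mu_set_def tree_leaf_nodes_red using mu_red by (auto intro!: image_cong)
  also have "\<dots> = ?f ` tree_leaf_nodes V A"
  proof -
    have "?f pj = ?f (Leaf j)"
      using mu_pj mu_Leaf[OF Leaf_j_in_V] labels_nonzero i_neq_j
      by (auto simp: ret_cherry_mu_def unit_vec_def fun_eq_iff)
    moreover have "Leaf j \<in> ?T" using Leaf_j_in_V is_leaf_Leaf not_Leaf
      by (auto simp: tree_leaf_nodes_def)
    ultimately have "?f pj \<in> ?f ` ?T" by (metis image_eqI)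
    moreover have "tree_leaf_nodes V A = insert pj ?T" using pj_in_tree_leaf_nodes by auto
    ultimately show ?thesis by (metis image_insert insert_absorb)
  qed
  also have "\<dots> = ret_cherry_mu i j ` mu_set V A" by (simp add: mu_set_def image_image)
  finally show ?thesis .
qed

lemma parents_red_Leaves: "parents A_red (Leaf i) = {q}" "parents A_red (Leaf j) = {g}"
  using parents_Leaf_i parents_Leaf_j distinct_nodes not_Leaf
  by (auto simp: parents_def A_red_def arcs_removed_def arcs_added_def)

end

section \<open>Isomorphic networks have equal \<open>\<mu>\<close>-representations\<close>

locale network_iso = N1: phylo_network n V1 A1 + N2: phylo_network n V2 A2
  for n V1 A1 V2 A2 +
  fixes f :: "node \<Rightarrow> node"
  assumes bij: "bij_betw f V1 V2"
    and fixes_Leaf: "\<And>i. Leaf i \<in> V1 \<Longrightarrow> f (Leaf i) = Leaf i"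
    and preserves_arcs: "\<And>u v. u \<in> V1 \<Longrightarrow> v \<in> V1 \<Longrightarrow> (u, v) \<in> A1 \<longleftrightarrow> (f u, f v) \<in> A2"
begin

lemma inj_V1: "inj_on f V1"
  using bij_betw_imp_inj_on[OF bij] .

lemma image_V1: "f ` V1 = V2"
  using bij_betw_imp_surj_on[OF bij] .

lemma children_iso:
  assumes "u \<in> V1"
  shows "children A2 (f u) = f ` children A1 u"
proof
  show "children A2 (f u) \<subseteq> f ` children A1 u"
  proof
    fix w' assume "w' \<in> children A2 (f u)"
    then have a: "(f u, w') \<in> A2" by (simp add: children_def)
    then have "w' \<in> V2" using N2.arc_nodes by blast
    then obtain w where w: "w \<in> V1" "w' = f w" using image_V1 by blast
    then have "(u, w) \<in> A1" using preserves_arcs[OF assms w(1)] a by simp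
    then show "w' \<in> f ` children A1 u" using w by (auto simp: children_def)
  qed
  show "f ` children A1 u \<subseteq> children A2 (f u)"
    using preserves_arcs[OF assms] N1.arc_nodes by (auto simp: children_def)
qed

lemma parents_iso:
  assumes "u \<in> V1"
  shows "parents A2 (f u) = f ` parents A1 u"
proof
  show "parents A2 (f u) \<subseteq> f ` parents A1 u"
  proof
    fix w' assume "w' \<in> parents A2 (f u)"
    then have a: "(w', f u) \<in> A2" by (simp add: parents_def)
    then have "w' \<in> V2" using N2.arc_nodes by blast
    then obtain w where w: "w \<in> V1" "w' = f w" using image_V1 by blast
    then have "(w, u) \<in> A1" using preserves_arcs[OF w(1) assms] a by simp
    then show "w' \<in> f ` parents A1 u" using w by (auto simp: parents_def)
  qed
  show "f ` parents A1 u \<subseteq> parents A2 (f u)"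
    using preserves_arcs[OF _ assms] N1.arc_nodes by (auto simp: parents_def)
qed

lemma degrees_iso:
  assumes "u \<in> V1"
  shows "indeg A2 (f u) = indeg A1 u" "outdeg A2 (f u) = outdeg A1 u"
proof -
  have "inj_on f (parents A1 u)" "inj_on f (children A1 u)"
    using inj_on_subset[OF inj_V1 N1.parents_subset] inj_on_subset[OF inj_V1 N1.children_subset]
    by simp_all
  then show "indeg A2 (f u) = indeg A1 u" "outdeg A2 (f u) = outdeg A1 u"
    using parents_iso[OF assms] children_iso[OF assms]
    by (simp_all add: indeg_eq_card_parents outdeg_eq_card_children card_image)
qed

lemma node_types_iso:
  assumes "u \<in> V1"
  shows "is_root A2 (f u) = is_root A1 u" "is_leaf A2 (f u) = is_leaf A1 u"
    "is_tree_node A2 (f u) = is_tree_node A1 u" "is_retic A2 (f u) = is_retic A1 u"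
  using degrees_iso[OF assms]
  by (simp_all add: is_root_def is_leaf_def is_tree_node_def is_retic_def)

lemma npaths_iso: "u \<in> V1 \<Longrightarrow> v \<in> V1 \<Longrightarrow> npaths A2 (f u) (f v) = npaths A1 u v"
proof (induction u rule: wf_induct_rule[OF N1.wf_converse_A])
  case (1 u)
  show ?case
  proof (cases "u = v")
    case True
    then show ?thesis using npaths_self[OF N1.acyclic_A] npaths_self[OF N2.acyclic_A] by simp
  next
    case False
    have ne: "f u \<noteq> f v"
    proof
      assume "f u = f v" then have "u = v" using inj_onD[OF inj_V1 _ 1(2) 1(3)] by simp
      then show False using False by simp
    qed
    have ij: "inj_on f (children A1 u)" using inj_on_subset[OF inj_V1 N1.children_subset] by simp
    have "npaths A2 (f u) (f v) = (\<Sum>w'\<in>f ` children A1 u. npaths A2 w' (f v))"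
      using npaths_children_sum[OF N2.finite_A N2.acyclic_A ne] children_iso[OF 1(2)] by simp
    also have "\<dots> = (\<Sum>w\<in>children A1 u. npaths A2 (f w) (f v))" using sum.reindex[OF ij] by simp
    also have "\<dots> = (\<Sum>w\<in>children A1 u. npaths A1 w v)"
    proof (rule sum.cong)
      fix w assume w: "w \<in> children A1 u"
      then have "w \<in> V1" "(w, u) \<in> A1\<inverse>" using N1.children_subset by (auto simp: children_def)
      then show "npaths A2 (f w) (f v) = npaths A1 w v" using 1(1) 1(3) by blast
    qed simp
    also have "\<dots> = npaths A1 u v" using npaths_children_sum[OF N1.finite_A N1.acyclic_A False]
      by simp
    finally show ?thesis .
  qed
qed

lemma retics_iso: "{h\<in>V2. is_retic A2 h} = f ` {h\<in>V1. is_retic A1 h}"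
  using image_V1 node_types_iso(4) by auto

lemma Leaf_in_V1:
  assumes "Leaf k \<in> V2"
  shows "Leaf k \<in> V1"
proof -
  obtain x where x: "x \<in> V1" "f x = Leaf k" using assms image_V1 by (metis imageE)
  then have "is_leaf A1 x" using node_types_iso(2)[OF x(1)] N2.is_leaf_Leaf[OF assms] by simp
  then obtain m where "x = Leaf m" using N1.leaf_iff_Leaf x(1) by auto
  then show ?thesis using x fixes_Leaf by auto
qed

lemma mu_iso:
  assumes "u \<in> V1"
  shows "mu V2 A2 (f u) = mu V1 A1 u"
proof
  fix k
  have fuV: "f u \<in> V2" using image_V1 assms by blast
  show "mu V2 A2 (f u) k = mu V1 A1 u k"
  proof (cases "k = 0")
    case True
    have ij: "inj_on f {h\<in>V1. is_retic A1 h}" by (rule inj_on_subset[OF inj_V1]) auto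
    have "mu V2 A2 (f u) k = (\<Sum>h\<in>f ` {h\<in>V1. is_retic A1 h}. npaths A2 (f u) h)"
      using True retics_iso by (simp add: mu_def)
    also have "\<dots> = (\<Sum>h\<in>{h\<in>V1. is_retic A1 h}. npaths A2 (f u) (f h))" using sum.reindex[OF ij]
      by simp
    also have "\<dots> = (\<Sum>h\<in>{h\<in>V1. is_retic A1 h}. npaths A1 u h)"
      by (rule sum.cong) (use npaths_iso[OF assms] in auto)
    finally show ?thesis using True by (simp add: mu_def)
  next
    case False
    show ?thesis
    proof (cases "Leaf k \<in> V1")
      case True
      then show ?thesis using npaths_iso[OF assms True] fixes_Leaf[OF True] False
        by (simp add: mu_def)
    next
      case nk: False
      then have "Leaf k \<notin> V2" using Leaf_in_V1 by blast
      then show ?thesis using N2.mu_non_taxon[OF fuV False] N1.mu_non_taxon[OF assms False nk]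
        by simp
    qed
  qed
qed

lemma tree_leaf_nodes_iso: "tree_leaf_nodes V2 A2 = f ` tree_leaf_nodes V1 A1"
proof
  show "tree_leaf_nodes V2 A2 \<subseteq> f ` tree_leaf_nodes V1 A1"
  proof
    fix v assume v: "v \<in> tree_leaf_nodes V2 A2"
    then have "v \<in> f ` V1" using image_V1 by (simp add: tree_leaf_nodes_def)
    then obtain x where x: "v = f x" "x \<in> V1" by (rule imageE)
    then have "x \<in> tree_leaf_nodes V1 A1" using v node_types_iso[OF x(2)]
      by (simp add: tree_leaf_nodes_def)
    then show "v \<in> f ` tree_leaf_nodes V1 A1" using x by simp
  qed
  show "f ` tree_leaf_nodes V1 A1 \<subseteq> tree_leaf_nodes V2 A2"
  proof
    fix v assume "v \<in> f ` tree_leaf_nodes V1 A1"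
    then obtain x where x: "v = f x" "x \<in> tree_leaf_nodes V1 A1" by (rule imageE)
    then have xV: "x \<in> V1" by (simp add: tree_leaf_nodes_def)
    then have "f x \<in> V2" using image_V1 by blast
    then show "v \<in> tree_leaf_nodes V2 A2" using x node_types_iso[OF xV]
      by (simp add: tree_leaf_nodes_def)
  qed
qed

lemma mu_set_eq: "mu_set V2 A2 = mu_set V1 A1"
proof -
  have "mu_set V2 A2 = mu V2 A2 ` f ` tree_leaf_nodes V1 A1"
    by (simp add: mu_set_def tree_leaf_nodes_iso)
  also have "\<dots> = mu V1 A1 ` tree_leaf_nodes V1 A1"
    unfolding image_image by (rule image_cong) (simp_all add: tree_leaf_nodes_def mu_iso)
  finally show ?thesis by (simp add: mu_set_def)
qed

end

lemma mu_set_eq_if_net_iso: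
  assumes "phylo_network n V1 A1" "phylo_network n V2 A2" "net_iso (V1, A1) (V2, A2)"
  shows "mu_set V1 A1 = mu_set V2 A2"
proof -
  obtain f where "bij_betw f V1 V2" "\<forall>i. Leaf i \<in> V1 \<longrightarrow> f (Leaf i) = Leaf i"
    "\<forall>u\<in>V1. \<forall>v\<in>V1. (u, v) \<in> A1 \<longleftrightarrow> (f u, f v) \<in> A2"
    using assms(3) by (auto simp: net_iso_def)
  with assms(1,2) interpret network_iso n V1 A1 V2 A2 f
    by (simp add: network_iso_def network_iso_axioms_def)
  show ?thesis using mu_set_eq by simp
qed

section \<open>Lifting isomorphisms over reductions\<close>

lemma pair_image_mem_iff:
  assumes "inj_on F V" "D \<subseteq> V \<times> V" "u \<in> V" "v \<in> V"
  shows "(F u, F v) \<in> (\<lambda>(x, y). (F x, F y)) ` D \<longleftrightarrow> (u, v) \<in> D"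
proof
  assume "(F u, F v) \<in> (\<lambda>(x, y). (F x, F y)) ` D"
  then obtain x y where xy: "(x, y) \<in> D" "F x = F u" "F y = F v" by auto
  moreover from xy(1) have "x \<in> V" "y \<in> V" using assms(2) by auto
  ultimately show "(u, v) \<in> D" using inj_onD[OF assms(1)] assms(3,4) by metis
qed force

text \<open>An isomorphism \<open>f\<close> of two reduced networks extends to the unreduced ones by a bijection \<open>h\<close>
  of the deleted nodes, as long as the combined map transports the deleted and the added arcs.\<close>
lemma iso_extend:
  assumes f: "bij_betw f V1' V2'" "\<forall>k. Leaf k \<in> V1' \<longrightarrow> f (Leaf k) = Leaf k"
      "\<forall>u\<in>V1'. \<forall>v\<in>V1'. (u, v) \<in> A1' \<longleftrightarrow> (f u, f v) \<in> A2'"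
    and A1': "A1' \<subseteq> V1' \<times> V1'" and A2': "A2' \<subseteq> V2' \<times> V2'"
    and V1: "V1 = V1' \<union> X1" "V1' \<inter> X1 = {}" and V2: "V2 = V2' \<union> X2" "V2' \<inter> X2 = {}"
    and h: "bij_betw h X1 X2" "\<And>k. Leaf k \<in> X1 \<Longrightarrow> h (Leaf k) = Leaf k"
    and F: "F = (\<lambda>x. if x \<in> X1 then h x else f x)"
    and A1: "A1 = A1' - D1 \<union> E1" and A2: "A2 = A2' - D2 \<union> E2"
    and DE: "D1 \<subseteq> V1 \<times> V1" "E1 \<subseteq> V1 \<times> V1"
    and D2: "(\<lambda>(x, y). (F x, F y)) ` D1 = D2" and E2: "(\<lambda>(x, y). (F x, F y)) ` E1 = E2"
  shows "net_iso (V1, A1) (V2, A2)"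
proof -
  have "F x = f x" if "x \<in> V1'" for x using that V1(2) by (auto simp: F)
  then have "bij_betw F V1' V2'" using bij_betw_cong[of V1' F f V2'] f(1) by simp
  moreover have "bij_betw F X1 X2" using bij_betw_cong[of X1 F h X2] h(1) by (simp add: F)
  ultimately have bij: "bij_betw F V1 V2" unfolding V1(1) V2(1) using bij_betw_combine V2(2)
    by blast
  then have inj: "inj_on F V1" by (rule bij_betw_imp_inj_on)
  have A': "(u, v) \<in> A1' \<longleftrightarrow> (F u, F v) \<in> A2'" if "u \<in> V1" "v \<in> V1" for u v
  proof (cases "u \<in> V1' \<and> v \<in> V1'")
    case True
    then show ?thesis using f(3) V1(2) by (auto simp: F)
  next
    case False
    then have "u \<in> X1 \<or> v \<in> X1" using that V1(1) by auto
    then have "F u \<in> X2 \<or> F v \<in> X2" using h(1) by (auto simp: F bij_betw_def)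
    then show ?thesis using False A1' A2' V2(2) by auto
  qed
  have "(u, v) \<in> A1 \<longleftrightarrow> (F u, F v) \<in> A2" if "u \<in> V1" "v \<in> V1" for u v
    unfolding A1 A2 D2[symmetric] E2[symmetric]
    using A'[OF that] pair_image_mem_iff[OF inj DE(1) that] pair_image_mem_iff[OF inj DE(2) that]
    by blast
  moreover have "F (Leaf k) = Leaf k" if "Leaf k \<in> V1" for k
    using that f(2) h(2) V1 by (auto simp: F)
  ultimately show ?thesis using bij unfolding net_iso_def by blast
qed

lemma iso_lift_cherry:
  assumes C1: "cherry_reduction n V1 A1 i j p1 g1" and C2: "cherry_reduction n V2 A2 i j p2 g2"
    and iso: "net_iso (reduce (V1, A1) (i, j)) (reduce (V2, A2) (i, j))"
  shows "net_iso (V1, A1) (V2, A2)"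
proof -
  interpret C1: cherry_reduction n V1 A1 i j p1 g1 by (rule C1)
  interpret C2: cherry_reduction n V2 A2 i j p2 g2 by (rule C2)
  obtain f where f: "bij_betw f C1.V_red C2.V_red" "\<forall>k. Leaf k \<in> C1.V_red \<longrightarrow> f (Leaf k) = Leaf k"
    "\<forall>u\<in>C1.V_red. \<forall>v\<in>C1.V_red. (u, v) \<in> C1.A_red \<longleftrightarrow> (f u, f v) \<in> C2.A_red"
    using iso unfolding C1.reduce_eq C2.reduce_eq net_iso_def by auto
  have in_V_red: "g1 \<in> C1.V_red" "Leaf j \<in> C1.V_red"
    using C1.g_in_V C1.distinct_nodes C1.Leaf_j_in_V by (auto simp: C1.V_red_def)
  have "(g1, Leaf j) \<in> C1.A_red" by (simp add: C1.A_red_def C1.arcs_added_def)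
  then have "f g1 \<in> parents C2.A_red (Leaf j)" using f(2,3) in_V_red by (simp add: parents_def)
  then have fg: "f g1 = g2" using C2.parents_red_Leaf_j by simp
  define h where "h = (\<lambda>x. if x = p1 then p2 else x)"
  define F where "F = (\<lambda>x. if x \<in> {p1, Leaf i} then h x else f x)"
  have F_values: "F p1 = p2" "F (Leaf i) = Leaf i" "F (Leaf j) = Leaf j" "F g1 = g2"
    using C1.distinct_nodes f(2) in_V_red fg by (auto simp: F_def h_def)
  show ?thesis
  proof (rule iso_extend[OF f C1.A_red_subset C2.A_red_subset C1.V_split C2.V_split _ _ F_def
        C1.A_eq_red C2.A_eq_red])
    show "bij_betw h {p1, Leaf i} {p2, Leaf i}"
      using C1.distinct_nodes(4) C2.distinct_nodes(4) by (auto simp: bij_betw_def inj_on_def h_def)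
    show "h (Leaf k) = Leaf k" if "Leaf k \<in> {p1, Leaf i}" for k
      using C1.nonleaf_not_Leaf[OF C1.p_in_V] C1.tree_node_p C1.leaf_not_tree by (auto simp: h_def)
    show "C1.arcs_added \<subseteq> V1 \<times> V1" "C1.arcs_removed \<subseteq> V1 \<times> V1"
      using C1.g_in_V C1.Leaf_j_in_V C1.removed_added(2) C1.arcs_subset
      by (auto simp: C1.arcs_added_def)
  qed (simp_all add: F_values C1.arcs_added_def C2.arcs_added_def
      C1.arcs_removed_def C2.arcs_removed_def)
qed

lemma iso_lift_ret_cherry:
  assumes R1: "ret_cherry_reduction n V1 A1 i j pi1 pj1 q1 g1"
    and R2: "ret_cherry_reduction n V2 A2 i j pi2 pj2 q2 g2"
    and iso: "net_iso (reduce (V1, A1) (i, j)) (reduce (V2, A2) (i, j))"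
  shows "net_iso (V1, A1) (V2, A2)"
proof -
  interpret R1: ret_cherry_reduction n V1 A1 i j pi1 pj1 q1 g1 by (rule R1)
  interpret R2: ret_cherry_reduction n V2 A2 i j pi2 pj2 q2 g2 by (rule R2)
  obtain f where f: "bij_betw f R1.V_red R2.V_red" "\<forall>k. Leaf k \<in> R1.V_red \<longrightarrow> f (Leaf k) = Leaf k"
    "\<forall>u\<in>R1.V_red. \<forall>v\<in>R1.V_red. (u, v) \<in> R1.A_red \<longleftrightarrow> (f u, f v) \<in> R2.A_red"
    using iso unfolding R1.reduce_eq R2.reduce_eq net_iso_def by auto
  have in_V_red: "g1 \<in> R1.V_red" "q1 \<in> R1.V_red" "Leaf j \<in> R1.V_red" "Leaf i \<in> R1.V_red"
    using R1.g_in_V R1.q_in_V R1.distinct_nodes R1.pj_neq_q R1.Leaves_in_V_red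
    by (auto simp: R1.V_red_def)
  have "(g1, Leaf j) \<in> R1.A_red" "(q1, Leaf i) \<in> R1.A_red"
    by (simp_all add: R1.A_red_def R1.arcs_added_def)
  then have "f g1 \<in> parents R2.A_red (Leaf j)" "f q1 \<in> parents R2.A_red (Leaf i)"
    using f(2,3) in_V_red by (simp_all add: parents_def)
  then have fgq: "f g1 = g2" "f q1 = q2" using R2.parents_red_Leaves by simp_all
  define h where "h = (\<lambda>x. if x = pi1 then pi2 else pj2)"
  define F where "F = (\<lambda>x. if x \<in> {pi1, pj1} then h x else f x)"
  have F_values: "F pi1 = pi2" "F pj1 = pj2" "F (Leaf i) = Leaf i" "F (Leaf j) = Leaf j"
    "F g1 = g2" "F q1 = q2"
    using R1.distinct_nodes R1.pj_neq_q R1.not_Leaf f(2) in_V_red fgq by (auto simp: F_def h_def)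
  show ?thesis
  proof (rule iso_extend[OF f R1.A_red_subset R2.A_red_subset R1.V_split R2.V_split _ _ F_def
        R1.A_eq_red R2.A_eq_red])
    show "bij_betw h {pi1, pj1} {pi2, pj2}"
      using R1.distinct_nodes(1) R2.distinct_nodes(1) by (auto simp: bij_betw_def inj_on_def h_def)
    show "h (Leaf k) = Leaf k" if "Leaf k \<in> {pi1, pj1}" for k
      using that R1.not_Leaf by auto
    show "R1.arcs_added \<subseteq> V1 \<times> V1" "R1.arcs_removed \<subseteq> V1 \<times> V1"
      using R1.g_in_V R1.q_in_V R1.Leaf_i_in_V R1.Leaf_j_in_V R1.removed_added(2) R1.arcs_subset
      by (auto simp: R1.arcs_added_def)
  qed (simp_all add: F_values R1.arcs_added_def R2.arcs_added_def
      R1.arcs_removed_def R2.arcs_removed_def)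
qed

section \<open>The \<open>\<mu>\<close>-representation determines an orchard network\<close>

lemma cherry_transfer:
  assumes C1: "cherry_reduction n V1 A1 i j p1 g1" and N2: "phylo_network n V2 A2"
    and eq: "mu_set V1 A1 = mu_set V2 A2"
  obtains p2 g2 where "cherry_reduction n V2 A2 i j p2 g2"
proof -
  interpret C1: cherry_reduction n V1 A1 i j p1 g1 by (rule C1)
  interpret N2: phylo_network n V2 A2 by (rule N2)
  have "mu V1 A1 p1 \<in> mu_set V2 A2" using C1.p_in_tree_leaf_nodes eq by (auto simp: mu_set_def)
  then obtain u where "u \<in> tree_leaf_nodes V2 A2" "mu V2 A2 u = (\<lambda>x. unit_vec i x + unit_vec j x)"
    using C1.mu_p by (auto simp: mu_set_def)
  then have "is_cherry (V2, A2) (i, j)"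
    using N2.cherry_of_mu C1.i_neq_j C1.labels_nonzero by blast
  then show ?thesis using N2.cherry_reductionI that by blast
qed

text \<open>The vector \<open>e\<^sub>0 + e\<^sub>i + e\<^sub>j\<close> only reveals a reticulated cherry on \<open>{i, j}\<close>. Its
  orientation is forced: for \<open>(i, j)\<close>, every vertex of \<open>V\<^sub>T\<close> other than \<open>Leaf j\<close> has
  \<open>\<mu>\<^sub>j \<le> \<mu>\<^sub>i\<close>, whereas \<open>(j, i)\<close> yields a non-leaf vertex with \<open>\<mu>\<^sub>i < \<mu>\<^sub>j\<close>.\<close>
lemma ret_cherry_transfer:
  assumes R1: "ret_cherry_reduction n V1 A1 i j pi1 pj1 q1 g1" and N2: "phylo_network n V2 A2"
    and eq: "mu_set V1 A1 = mu_set V2 A2"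
  obtains pi2 pj2 q2 g2 where "ret_cherry_reduction n V2 A2 i j pi2 pj2 q2 g2"
proof -
  interpret R1: ret_cherry_reduction n V1 A1 i j pi1 pj1 q1 g1 by (rule R1)
  interpret N2: phylo_network n V2 A2 by (rule N2)
  have "mu V1 A1 pj1 \<in> mu_set V2 A2" using R1.pj_in_tree_leaf_nodes eq by (auto simp: mu_set_def)
  then obtain u where "u \<in> tree_leaf_nodes V2 A2"
    "mu V2 A2 u = (\<lambda>x. unit_vec 0 x + unit_vec i x + unit_vec j x)"
    using R1.mu_pj by (auto simp: mu_set_def)
  then have "is_ret_cherry (V2, A2) (i, j) \<or> is_ret_cherry (V2, A2) (j, i)"
    using N2.ret_cherry_of_mu R1.i_neq_j R1.labels_nonzero by blast
  moreover have "\<not> is_ret_cherry (V2, A2) (j, i)"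
  proof
    assume "is_ret_cherry (V2, A2) (j, i)"
    then obtain pi2 pj2 q2 g2 where "ret_cherry_reduction n V2 A2 j i pi2 pj2 q2 g2"
      by (rule N2.ret_cherry_reductionI)
    then obtain t where t: "t \<in> tree_leaf_nodes V2 A2" "\<not> is_leaf A2 t"
      "mu V2 A2 t i < mu V2 A2 t j"
      by (rule ret_cherry_reduction.ret_cherry_mu_less)
    have "mu V2 A2 t \<in> mu_set V1 A1" using t(1) eq by (simp add: mu_set_def)
    then obtain x where x: "x \<in> tree_leaf_nodes V1 A1" "mu V1 A1 x = mu V2 A2 t"
      by (auto simp: mu_set_def)
    show False
    proof (cases "x = Leaf j")
      case True
      then have "mu V2 A2 t = unit_vec j" using x(2) R1.mu_Leaf[OF R1.Leaf_j_in_V] by simp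
      then have "t = Leaf j" using N2.mu_eq_unit_vec[OF t(1)] R1.labels_nonzero by blast
      with t(1,2) show False using N2.is_leaf_Leaf by (auto simp: tree_leaf_nodes_def)
    next
      case False
      with R1.ret_cherry_mu_le[OF x(1)] x(2) t(3) show False by simp
    qed
  qed
  ultimately have "is_ret_cherry (V2, A2) (i, j)" by blast
  then show ?thesis using N2.ret_cherry_reductionI that by blast
qed

lemma (in phylo_network) single_leaf_of_mu_set:
  assumes "mu_set V A = {unit_vec a}" "a \<noteq> 0"
  shows "V = {the_root, Leaf a}" "A = {(the_root, Leaf a)}"
proof -
  obtain c where c: "children A the_root = {c}" "c \<in> tree_leaf_nodes V A"
    "\<And>v. v \<in> V \<Longrightarrow> v \<noteq> the_root \<Longrightarrow> (c, v) \<in> A\<^sup>*"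
    using root_child by blast
  have "mu V A c = unit_vec a" using c(2) assms(1) by (auto simp: mu_set_def)
  then have c_eq: "c = Leaf a" using mu_eq_unit_vec[OF c(2) _ assms(2)] by simp
  have a_in_V: "Leaf a \<in> V" using c(2) c_eq tree_leaf_nodesD by blast
  have no_children: "children A (Leaf a) = {}" using children_Leaf[OF a_in_V] .
  show V_eq: "V = {the_root, Leaf a}"
  proof (intro equalityI subsetI)
    fix v assume v: "v \<in> V"
    show "v \<in> {the_root, Leaf a}"
    proof (cases "v = the_root")
      case False
      with c(3)[OF v] c_eq have "(Leaf a, v) \<in> A\<^sup>*" by simp
      then show ?thesis
        by (cases rule: converse_rtranclE) (use no_children in \<open>auto simp: children_def\<close>)
    qed simp
  qed (use the_root a_in_V in auto)
  show "A = {(the_root, Leaf a)}"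
  proof (intro equalityI subsetI)
    fix e assume "e \<in> A"
    then obtain u v where e: "e = (u, v)" "(u, v) \<in> A" by (cases e) auto
    then have "u \<noteq> Leaf a" using no_children by (auto simp: children_def)
    then have "u = the_root" using arc_nodes[OF e(2)] V_eq by auto
    then show "e \<in> {(the_root, Leaf a)}" using c(1) c_eq e by (auto simp: children_def)
  qed (use c(1) c_eq in \<open>auto simp: children_def\<close>)
qed

lemma iso_single_leaf:
  assumes N1: "phylo_network n {r, Leaf a} {(r, Leaf a)}" and N2: "phylo_network n V2 A2"
    and eq: "mu_set {r, Leaf a} {(r, Leaf a)} = mu_set V2 A2"
  shows "net_iso ({r, Leaf a}, {(r, Leaf a)}) (V2, A2)"
proof -
  interpret N1: phylo_network n "{r, Leaf a}" "{(r, Leaf a)}" by (rule N1)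
  interpret N2: phylo_network n V2 A2 by (rule N2)
  have a_in_V1: "Leaf a \<in> {r, Leaf a}" by simp
  have r_neq: "r \<noteq> Leaf a" using N1.not_trancl_self by blast
  then have "indeg {(r, Leaf a)} r = 0" by (simp add: indeg_def)
  then have r_type: "\<not> is_leaf {(r, Leaf a)} r" "\<not> is_tree_node {(r, Leaf a)} r"
    by (simp_all add: is_leaf_def is_tree_node_def)
  then have "tree_leaf_nodes {r, Leaf a} {(r, Leaf a)} = {Leaf a}"
    using N1.is_leaf_Leaf[OF a_in_V1] by (auto simp: tree_leaf_nodes_def)
  then have "mu_set V2 A2 = {unit_vec a}" using eq N1.mu_Leaf[OF a_in_V1] by (simp add: mu_set_def)
  moreover have "a \<noteq> 0" using N1.Leaf_label_range[OF a_in_V1] by simp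
  ultimately obtain r2 where V2: "V2 = {r2, Leaf a}" and A2: "A2 = {(r2, Leaf a)}"
    using N2.single_leaf_of_mu_set by blast
  then have root_neq: "r2 \<noteq> Leaf a" using N2.not_trancl_self by blast
  have r_not_Leaf: "r \<noteq> Leaf k" for k using N1.nonleaf_not_Leaf[OF insertI1 r_type(1)] .
  define f where "f = (\<lambda>x. if x = r then r2 else x)"
  have "bij_betw f {r, Leaf a} V2"
    using r_neq root_neq by (simp add: V2 f_def bij_betw_def inj_on_def insert_commute)
  moreover have "\<forall>u\<in>{r, Leaf a}. \<forall>v\<in>{r, Leaf a}. (u, v) \<in> {(r, Leaf a)} \<longleftrightarrow> (f u, f v) \<in> A2"
    using r_neq root_neq unfolding f_def A2 by auto
  moreover have "f (Leaf k) = Leaf k" for k using r_not_Leaf[of k] by (simp add: f_def)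
  ultimately show ?thesis unfolding net_iso_def by blast
qed

lemma reduction_step:
  assumes N1: "phylo_network n V1 A1" and N2: "phylo_network n V2 A2"
    and eq: "mu_set V1 A1 = mu_set V2 A2" and s: "is_reducible (V1, A1) (i, j)"
  obtains V1' A1' V2' A2' where "reduce (V1, A1) (i, j) = (V1', A1')"
    "phylo_network n V1' A1'" "phylo_network n V2' A2'" "mu_set V1' A1' = mu_set V2' A2'"
    "net_iso (V1', A1') (V2', A2') \<Longrightarrow> net_iso (V1, A1) (V2, A2)"
proof -
  interpret N1: phylo_network n V1 A1 by (rule N1)
  from s consider "is_cherry (V1, A1) (i, j)" | "is_ret_cherry (V1, A1) (i, j)"
    by (auto simp: is_reducible_def)
  then show ?thesis
  proof cases
    case 1
    then obtain p1 g1 where C1: "cherry_reduction n V1 A1 i j p1 g1" by (rule N1.cherry_reductionI)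
    then obtain p2 g2 where C2: "cherry_reduction n V2 A2 i j p2 g2"
      using cherry_transfer N2 eq by blast
    interpret C1: cherry_reduction n V1 A1 i j p1 g1 by (rule C1)
    interpret C2: cherry_reduction n V2 A2 i j p2 g2 by (rule C2)
    show ?thesis
    proof (rule that[OF C1.reduce_eq C1.phylo_network_red C2.phylo_network_red])
      show "mu_set C1.V_red C1.A_red = mu_set C2.V_red C2.A_red"
        using eq by (simp add: C1.mu_set_red C2.mu_set_red)
    qed (use iso_lift_cherry[OF C1 C2] C1.reduce_eq C2.reduce_eq in simp)
  next
    case 2
    then obtain pi1 pj1 q1 g1 where R1: "ret_cherry_reduction n V1 A1 i j pi1 pj1 q1 g1"
      by (rule N1.ret_cherry_reductionI)
    then obtain pi2 pj2 q2 g2 where R2: "ret_cherry_reduction n V2 A2 i j pi2 pj2 q2 g2"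
      using ret_cherry_transfer N2 eq by blast
    interpret R1: ret_cherry_reduction n V1 A1 i j pi1 pj1 q1 g1 by (rule R1)
    interpret R2: ret_cherry_reduction n V2 A2 i j pi2 pj2 q2 g2 by (rule R2)
    show ?thesis
    proof (rule that[OF R1.reduce_eq R1.phylo_network_red R2.phylo_network_red])
      show "mu_set R1.V_red R1.A_red = mu_set R2.V_red R2.A_red"
        using eq by (simp add: R1.mu_set_red R2.mu_set_red)
    qed (use iso_lift_ret_cherry[OF R1 R2] R1.reduce_eq R2.reduce_eq in simp)
  qed
qed

lemma iso_of_mu_set_eq:
  assumes "reducible_seq (V1, A1) S" "reduce_seq (V1, A1) S = ({r, Leaf a}, {(r, Leaf a)})"
    and "phylo_network n V1 A1" "phylo_network n V2 A2" "mu_set V1 A1 = mu_set V2 A2"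
  shows "net_iso (V1, A1) (V2, A2)"
  using assms
proof (induction S arbitrary: V1 A1 V2 A2)
  case Nil
  then show ?case using iso_single_leaf by (simp add: reduce_seq_def)
next
  case (Cons s S)
  obtain i j where s: "s = (i, j)" by (cases s)
  obtain V1' A1' V2' A2' where red: "reduce (V1, A1) (i, j) = (V1', A1')"
    and "phylo_network n V1' A1'" "phylo_network n V2' A2'" "mu_set V1' A1' = mu_set V2' A2'"
    and lift: "net_iso (V1', A1') (V2', A2') \<Longrightarrow> net_iso (V1, A1) (V2, A2)"
    using reduction_step Cons.prems(1,3-5) s by (metis reducible_seq.simps(2))
  moreover have "reducible_seq (V1', A1') S"
    "reduce_seq (V1', A1') S = ({r, Leaf a}, {(r, Leaf a)})"
    using Cons.prems(1,2) s red by (simp_all add: reduce_seq_def)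
  ultimately show ?case using Cons.IH lift by blast
qed

lemma mu_rep_eq_image: "mu_rep n (V, A) = (\<lambda>f. map f [0..<Suc n]) ` mu_set V A"
  unfolding mu_rep_def mu_set_def tree_leaf_nodes_def by (simp add: mu_vec_eq_map_mu image_image)

lemma (in phylo_network) mu_set_subset_vanishing: "mu_set V A \<subseteq> {f. \<forall>k>n. f k = 0}"
  using mu_beyond_n by (auto simp: mu_set_def tree_leaf_nodes_def)

lemma inj_on_map_upt: "inj_on (\<lambda>f. map f [0..<Suc n]) {f :: nat \<Rightarrow> nat. \<forall>k>n. f k = 0}"
proof (rule inj_onI, rule ext)
  fix f g :: "nat \<Rightarrow> nat" and k
  assume "f \<in> {f. \<forall>k>n. f k = 0}" "g \<in> {f. \<forall>k>n. f k = 0}" "map f [0..<Suc n] = map g [0..<Suc n]"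
  then show "f k = g k" by (cases "k \<le> n") (auto simp: map_eq_conv)
qed

lemma mu_rep_eq_iff:
  assumes "phylo_network n V1 A1" "phylo_network n V2 A2"
  shows "mu_rep n (V1, A1) = mu_rep n (V2, A2) \<longleftrightarrow> mu_set V1 A1 = mu_set V2 A2"
  unfolding mu_rep_eq_image
  using inj_on_image_eq_iff[OF inj_on_map_upt phylo_network.mu_set_subset_vanishing[OF assms(1)]
      phylo_network.mu_set_subset_vanishing[OF assms(2)]] .

lemma finite_mu_rep: "phylo_network n V A \<Longrightarrow> finite (mu_rep n (V, A))"
  using phylo_network.finite_V by (simp add: mu_rep_eq_image mu_set_def tree_leaf_nodes_def)

lemma card_sym_diff_triangle:
  assumes "finite X" "finite Y" "finite Z"
  shows "card ((X - Z) \<union> (Z - X)) \<le> card ((X - Y) \<union> (Y - X)) + card ((Y - Z) \<union> (Z - Y))"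
proof -
  have "card ((X - Z) \<union> (Z - X)) \<le> card (((X - Y) \<union> (Y - X)) \<union> ((Y - Z) \<union> (Z - Y)))"
    using assms by (intro card_mono) auto
  also have "\<dots> \<le> card ((X - Y) \<union> (Y - X)) + card ((Y - Z) \<union> (Z - Y))" by (rule card_Un_le)
  finally show ?thesis .
qed

lemma orchard_phylo_network: "orchard n (V, A) \<Longrightarrow> phylo_network n V A"
  by (simp add: orchard_def phylo_network_def)

lemma d_mu_commute: "d_mu n N1 N2 = d_mu n N2 N1"
  by (simp add: d_mu_def Un_commute)

lemma d_mu_triangle:
  assumes "orchard n N1" "orchard n N2" "orchard n N3"
  shows "d_mu n N1 N3 \<le> d_mu n N1 N2 + d_mu n N2 N3"
  using assms card_sym_diff_triangle finite_mu_rep orchard_phylo_network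
  unfolding d_mu_def by (metis prod.exhaust)

lemma d_mu_eq_0_iff:
  assumes "orchard n (V1, A1)" "orchard n (V2, A2)"
  shows "d_mu n (V1, A1) (V2, A2) = 0 \<longleftrightarrow> net_iso (V1, A1) (V2, A2)"
proof -
  have N: "phylo_network n V1 A1" "phylo_network n V2 A2"
    using assms orchard_phylo_network by blast+
  then have "finite (mu_rep n (V1, A1))" "finite (mu_rep n (V2, A2))"
    by (simp_all add: finite_mu_rep)
  then have "d_mu n (V1, A1) (V2, A2) = 0 \<longleftrightarrow> mu_rep n (V1, A1) = mu_rep n (V2, A2)"
    by (auto simp: d_mu_def)
  also have "\<dots> \<longleftrightarrow> mu_set V1 A1 = mu_set V2 A2" by (rule mu_rep_eq_iff[OF N])
  also have "\<dots> \<longleftrightarrow> net_iso (V1, A1) (V2, A2)"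
    using assms(1) iso_of_mu_set_eq[OF _ _ N] mu_set_eq_if_net_iso[OF N] by (auto simp: orchard_def)
  finally show ?thesis .
qed

theorem mainTheorem12:
  fixes n :: nat and N1 N2 N3 :: network
  assumes "orchard n N1" and "orchard n N2" and "orchard n N3"
  shows "d_mu n N1 N2 \<ge> 0
    \<and> (d_mu n N1 N2 = 0 \<longleftrightarrow> net_iso N1 N2)
    \<and> d_mu n N1 N2 = d_mu n N2 N1
    \<and> d_mu n N1 N3 \<le> d_mu n N1 N2 + d_mu n N2 N3"
  using d_mu_eq_0_iff[of n "fst N1" "snd N1" "fst N2" "snd N2"] assms
    d_mu_commute d_mu_triangle[OF assms] by simp

end
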